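(* Let $n\ge 2$. There is a one-to-one correspondence between the families of spherical simplices generating the reflection group $B_n$ (families considered up to isometry) and the trees with $n$ vertices having exactly one marked vertex (considered up to isomorphism preserving the mark). The correspondence is given as follows: realize the family by normal vectors $\pm f_1,\dots,\pm f_n$ which, suitably normalized, lie in the root system $\Delta(B_n)=\{\pm h_i,\ \pm h_i\pm h_j: 1\le i<j\le n\}$ ($h_1,\dots,h_n$ the standard basis of $\mathbb{R}^n$); the associated graph has vertices $v_1,\dots,v_n$ corresponding to $h_1,\dots,h_n$, $v_i$ and $v_j$ are joined by an edge for each of $\pm(h_i+h_j)$, $\pm(h_i-h_j)$ that occurs among the $f_k$, and $v_i$ is marked iff $\pm h_i$ occurs among the $f_k$. This correspondence is well defined and is a bijection onto the set of trees with $n$ vertices and exactly one marked vertex.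
   Context: A family of spherical simplices in $S^{n-1}$ is the set of $2^n$ simplices cut out by $n$ hyperplanes through the origin in $\mathbb{R}^n$ with linearly independent unit normals $f_1,\dots,f_n$; it is encoded by $\pm f_1,\dots,\pm f_n$. The family generates the group generated by the reflections in the hyperplanes $f_i^\perp$; it generates $B_n$ if this group is the finite Coxeter (Weyl) group of type $B_n$ (up to conjugation by an orthogonal transformation). *)

theory Defs
  imports "HOL-Analysis.Analysis"
begin

definition reflection :: "real^'n \<Rightarrow> real^'n \<Rightarrow> real^'n" where
  "reflection v x = x - (2 * (x \<bullet> v) / (v \<bullet> v)) *\<^sub>R v"

text \<open>The group generated by the reflections in the hyperplanes orthogonal to the
  vectors of S (reflections are involutions, so the generated monoid is the group).\<close>
inductive_set refl_group :: "(real^'n) set \<Rightarrow> (real^'n \<Rightarrow> real^'n) set"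
  for S :: "(real^'n) set" where
  id: "id \<in> refl_group S"
| step: "g \<in> refl_group S \<Longrightarrow> v \<in> S \<Longrightarrow> reflection v \<circ> g \<in> refl_group S"

definition Bn_roots :: "(real^'n) set" where
  "Bn_roots = {a *\<^sub>R axis i (1::real) | i a. a \<in> {1, -1}}
     \<union> {a *\<^sub>R axis i (1::real) + b *\<^sub>R axis j (1::real) | i j a b. i \<noteq> j \<and> a \<in> {1, -1} \<and> b \<in> {1, -1}}"

text \<open>A family is encoded by the set {+-f_1,...,+-f_n} of n linearly independent unit vectors.\<close>
definition simplex_family :: "(real^'n) set \<Rightarrow> bool" where
  "simplex_family F \<longleftrightarrow> (\<exists>f :: 'n \<Rightarrow> real^'n.
      (\<forall>i. norm (f i) = 1) \<and> inj f \<and> independent (range f) \<and>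
      F = range f \<union> uminus ` range f)"

definition generates_Bn :: "(real^'n) set \<Rightarrow> bool" where
  "generates_Bn F \<longleftrightarrow> simplex_family F \<and>
     (\<exists>Q :: real^'n \<Rightarrow> real^'n. orthogonal_transformation Q \<and>
        refl_group F = (\<lambda>g. Q \<circ> g \<circ> inv Q) ` refl_group Bn_roots)"

definition isometric_families :: "(real^'n) set \<Rightarrow> (real^'n) set \<Rightarrow> bool" where
  "isometric_families F F' \<longleftrightarrow> (\<exists>Q. orthogonal_transformation Q \<and> Q ` F = F')"

definition realizes :: "(real^'n) set \<Rightarrow> (real^'n) set \<Rightarrow> bool" where
  "realizes F G \<longleftrightarrow> G \<subseteq> Bn_roots \<and> F = (\<lambda>v. (1 / norm v) *\<^sub>R v) ` G"

definition Bn_edges :: "(real^'n) set \<Rightarrow> 'n \<Rightarrow> 'n \<Rightarrow> nat" where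
  "Bn_edges G i j = (if i = j then 0 else
     card {s :: real. s \<in> {1, -1} \<and>
       (axis i (1::real) + s *\<^sub>R axis j (1::real) \<in> G \<or> - (axis i (1::real) + s *\<^sub>R axis j (1::real)) \<in> G)})"

definition Bn_marked :: "(real^'n) set \<Rightarrow> 'n set" where
  "Bn_marked G = {i. axis i (1::real) \<in> G \<or> - axis i (1::real) \<in> G}"

definition adj :: "('n \<Rightarrow> 'n \<Rightarrow> nat) \<Rightarrow> 'n \<Rightarrow> 'n \<Rightarrow> bool" where
  "adj E i j \<longleftrightarrow> E i j > 0"

definition has_cycle :: "('n \<Rightarrow> 'n \<Rightarrow> nat) \<Rightarrow> bool" where
  "has_cycle E \<longleftrightarrow> (\<exists>vs. length vs \<ge> 3 \<and> distinct vs \<and>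
      (\<forall>k. Suc k < length vs \<longrightarrow> adj E (vs ! k) (vs ! Suc k)) \<and> adj E (last vs) (hd vs))"

definition is_tree :: "('n \<Rightarrow> 'n \<Rightarrow> nat) \<Rightarrow> bool" where
  "is_tree E \<longleftrightarrow> (\<forall>i j. E i j = E j i) \<and> (\<forall>i. E i i = 0) \<and> (\<forall>i j. E i j \<le> 1) \<and>
     (\<forall>i j. (adj E)\<^sup>*\<^sup>* i j) \<and> \<not> has_cycle E"

definition marked_tree_one :: "('n \<Rightarrow> 'n \<Rightarrow> nat) \<Rightarrow> 'n set \<Rightarrow> bool" where
  "marked_tree_one E M \<longleftrightarrow> is_tree E \<and> card M = 1"

definition marked_iso :: "('n \<Rightarrow> 'n \<Rightarrow> nat) \<Rightarrow> 'n set \<Rightarrow> ('n \<Rightarrow> 'n \<Rightarrow> nat) \<Rightarrow> 'n set \<Rightarrow> bool" where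
  "marked_iso E M E' M' \<longleftrightarrow> (\<exists>\<pi>. bij \<pi> \<and> (\<forall>i j. E' (\<pi> i) (\<pi> j) = E i j) \<and> \<pi> ` M = M')"

end

theory Submission
  imports Defs
begin

text \<open>Conjugating a family that generates \<open>B\<^sub>n\<close> back by the isometry of the definition,
  every reflection in a normal vector lies in the Weyl group, hence is a signed permutation
  matrix; this forces each normal to be a normalized root \<open>\<plusminus>h\<^sub>i\<close> or \<open>(\<plusminus>h\<^sub>i \<plusminus> h\<^sub>j)/\<surd>2\<close>.
  As the roots generate the whole Weyl group, their graph is connected (the coordinate subspace
  of a component would be invariant) and has a marked vertex (the product of the coordinates
  would be invariant).  A spanning tree grown from a marked vertex \<open>m\<close> yields the \<open>n\<close>
  independent roots \<open>h\<^sub>m\<close> and \<open>h\<^bsub>p v\<^esub> \<plusminus> h\<^sub>v\<close> among the \<open>2n\<close> normals, which by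
  counting are then all of them; so the graph is exactly this marked tree.
  An isometry between two such families normalizes the Weyl group, and for \<open>n \<ge> 3\<close> this makes
  it a signed permutation matrix, which induces a marked isomorphism (for \<open>n = 2\<close> there is only
  one marked tree).  Conversely a marked isomorphism lifts to a signed permutation matrix whose
  signs are chosen along the tree from the root.  Finally every marked tree occurs: the
  reflections in \<open>h\<^sub>m\<close> and \<open>h\<^bsub>p v\<^esub> - h\<^sub>v\<close> already generate the Weyl group.\<close>

abbreviation hvec :: "'n \<Rightarrow> real^'n" where
  "hvec i \<equiv> axis i 1"

lemma hvec_nth: "hvec i $ j = (if j = i then 1 else 0)"
  by (simp add: axis_def)

lemma reflection_nth: "reflection v x $ t = x $ t - (2 * (x \<bullet> v) / (v \<bullet> v)) * v $ t"
  by (simp add: reflection_def)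

lemma reflection_scaleR: "c \<noteq> 0 \<Longrightarrow> reflection (c *\<^sub>R v) = reflection v"
  by (rule ext) (simp add: reflection_def field_simps)

lemma reflection_uminus: "reflection (- v) = reflection v"
  using reflection_scaleR[of "-1" v] by simp

lemma reflection_sgn: "reflection (sgn v) = reflection v"
  by (cases "v = 0") (simp_all add: sgn_div_norm reflection_scaleR)

lemma linear_reflection: "linear (reflection v)"
  by (rule linearI)
    (simp_all add: reflection_def inner_add_left add_divide_distrib algebra_simps scaleR_diff_right)

lemma reflection_reflection: "reflection v (reflection v x) = x"
  by (cases "v = 0") (simp_all add: reflection_def inner_diff_left algebra_simps)

lemma reflection_o_reflection: "reflection v \<circ> reflection v = id"
  by (rule ext) (simp add: reflection_reflection)

lemma inv_reflection: "inv (reflection v) = reflection v"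
  by (rule inv_unique_comp) (simp_all add: reflection_o_reflection)

lemma orthogonal_transformation_reflection: "orthogonal_transformation (reflection v)"
proof -
  have "reflection v x \<bullet> reflection v x = x \<bullet> x" for x
    by (cases "v = 0")
      (simp_all add: reflection_def inner_diff_left inner_diff_right inner_commute[of v x]
        field_simps power2_eq_square)
  then show ?thesis
    by (simp add: orthogonal_transformation linear_reflection norm_eq_sqrt_inner)
qed

lemma orthogonal_transformation_f_inv_f:
  fixes Q :: "real^'n \<Rightarrow> real^'n"
  shows "orthogonal_transformation Q \<Longrightarrow> Q (inv Q x) = x"
  by (meson orthogonal_transformation_surj surj_f_inv_f)

lemma orthogonal_transformation_inv_f_f:
  fixes Q :: "real^'n \<Rightarrow> real^'n"
  shows "orthogonal_transformation Q \<Longrightarrow> inv Q (Q x) = x"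
  by (meson orthogonal_transformation_inj inv_f_f)

lemma reflection_conjugate:
  fixes Q :: "real^'n \<Rightarrow> real^'n"
  assumes Q: "orthogonal_transformation Q"
  shows "Q \<circ> reflection v \<circ> inv Q = reflection (Q v)"
proof
  fix x
  have lin: "linear Q"
    using Q orthogonal_transformation_linear by blast
  have "inv Q x \<bullet> v = x \<bullet> Q v"
    using Q orthogonal_transformation_f_inv_f[OF Q, of x] by (metis orthogonal_transformation_def)
  moreover have "v \<bullet> v = Q v \<bullet> Q v"
    using Q by (simp add: orthogonal_transformation_def)
  ultimately show "(Q \<circ> reflection v \<circ> inv Q) x = reflection (Q v) x"
    by (simp add: reflection_def linear_diff[OF lin] linear_scale[OF lin]
        orthogonal_transformation_f_inv_f[OF Q])
qed

lemma refl_group_comp: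
  "g \<in> refl_group S \<Longrightarrow> h \<in> refl_group S \<Longrightarrow> g \<circ> h \<in> refl_group S"
proof (induction rule: refl_group.induct)
  case id
  then show ?case by simp
next
  case (step g v)
  then show ?case
    using refl_group.step[OF step.IH[OF step.prems] step.hyps(2)] by (simp only: comp_assoc)
qed

lemma reflection_in_refl_group: "v \<in> S \<Longrightarrow> reflection v \<in> refl_group S"
  using refl_group.step[OF refl_group.id] by fastforce

lemma orthogonal_transformation_refl_group:
  "g \<in> refl_group S \<Longrightarrow> orthogonal_transformation g"
proof (induction rule: refl_group.induct)
  case id
  then show ?case by (simp add: id_def)
next
  case (step g v)
  then show ?case
    using orthogonal_transformation_compose orthogonal_transformation_reflection by blast
qed

lemma inv_in_refl_group: "g \<in> refl_group S \<Longrightarrow> inv g \<in> refl_group S"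
proof (induction rule: refl_group.induct)
  case id
  then show ?case by (simp only: inv_id refl_group.id)
next
  case (step g v)
  have "inv (reflection v \<circ> g) = inv g \<circ> reflection v"
    using o_inv_distrib orthogonal_transformation_bij inv_reflection
      orthogonal_transformation_reflection orthogonal_transformation_refl_group[OF step.hyps(1)]
    by metis
  then show ?case
    using refl_group_comp[OF step.IH reflection_in_refl_group[OF step.hyps(2)]] by (simp only:)
qed

lemma reflection_image_in_refl_group:
  assumes "g \<in> refl_group S" "reflection v \<in> refl_group S"
  shows "reflection (g v) \<in> refl_group S"
proof -
  have "reflection (g v) = g \<circ> reflection v \<circ> inv g"
    using reflection_conjugate[OF orthogonal_transformation_refl_group[OF assms(1)]] by simp
  then show ?thesis
    using assms refl_group_comp inv_in_refl_group by metis
qed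

lemma refl_group_subsetI:
  assumes "\<And>v. v \<in> S \<Longrightarrow> reflection v \<in> refl_group T"
  shows "refl_group S \<subseteq> refl_group T"
proof
  fix g
  assume "g \<in> refl_group S"
  then show "g \<in> refl_group T"
  proof induction
    case id
    then show ?case by (rule refl_group.id)
  next
    case (step g v)
    then show ?case using refl_group_comp assms by blast
  qed
qed

lemma refl_group_mono: "S \<subseteq> T \<Longrightarrow> refl_group S \<subseteq> refl_group T"
  by (rule refl_group_subsetI) (auto intro: reflection_in_refl_group)

lemma refl_group_sgn_image: "refl_group (sgn ` S) = refl_group S"
proof (intro equalityI refl_group_subsetI)
  fix v
  assume "v \<in> sgn ` S"
  then show "reflection v \<in> refl_group S"
    by (auto simp: reflection_sgn intro: reflection_in_refl_group)
next
  fix v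
  assume "v \<in> S"
  then have "reflection (sgn v) \<in> refl_group (sgn ` S)"
    by (intro reflection_in_refl_group) simp
  then show "reflection v \<in> refl_group (sgn ` S)"
    by (simp add: reflection_sgn)
qed

lemma refl_group_invariant:
  assumes "g \<in> refl_group S" and "\<And>v x. v \<in> S \<Longrightarrow> P x \<Longrightarrow> P (reflection v x)" and "P x"
  shows "P (g x)"
  using assms(1,3) by (induction arbitrary: x rule: refl_group.induct) (simp_all add: assms(2))

lemma refl_group_image:
  fixes Q :: "real^'n \<Rightarrow> real^'n"
  assumes Q: "orthogonal_transformation Q"
  shows "refl_group (Q ` S) = (\<lambda>g. Q \<circ> g \<circ> inv Q) ` refl_group S"
proof
  have QQ: "Q \<circ> inv Q = id"
    using orthogonal_transformation_f_inv_f[OF Q] by (auto simp: fun_eq_iff)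
  have conj_step: "Q \<circ> (reflection v \<circ> g) \<circ> inv Q = reflection (Q v) \<circ> (Q \<circ> g \<circ> inv Q)" for v g
    using reflection_conjugate[OF Q, of v, symmetric]
    by (simp add: fun_eq_iff orthogonal_transformation_inv_f_f[OF Q])
  show "refl_group (Q ` S) \<subseteq> (\<lambda>g. Q \<circ> g \<circ> inv Q) ` refl_group S"
  proof
    fix g
    assume "g \<in> refl_group (Q ` S)"
    then show "g \<in> (\<lambda>g. Q \<circ> g \<circ> inv Q) ` refl_group S"
    proof induction
      case id
      then show ?case
        using QQ refl_group.id by (metis comp_id image_eqI)
    next
      case (step g w)
      then obtain g0 v where g0: "g0 \<in> refl_group S" "g = Q \<circ> g0 \<circ> inv Q"
        and v: "v \<in> S" "w = Q v"
        by blast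
      have "reflection w \<circ> g = Q \<circ> (reflection v \<circ> g0) \<circ> inv Q"
        unfolding g0(2) v(2) by (rule conj_step[symmetric])
      then show ?case
        using refl_group.step[OF g0(1) v(1)] by (rule image_eqI)
    qed
  qed
  show "(\<lambda>g. Q \<circ> g \<circ> inv Q) ` refl_group S \<subseteq> refl_group (Q ` S)"
  proof clarify
    fix g
    assume "g \<in> refl_group S"
    then show "Q \<circ> g \<circ> inv Q \<in> refl_group (Q ` S)"
    proof induction
      case id
      then show ?case by (simp only: comp_id QQ refl_group.id)
    next
      case (step g v)
      have "Q v \<in> Q ` S"
        using step.hyps(2) by blast
      from refl_group.step[OF step.IH this] show ?case
        by (simp only: conj_step)
    qed
  qed
qed

section \<open>The root system and the Weyl group of type B\<close>

abbreviation Weyl_Bn :: "(real^'n \<Rightarrow> real^'n) set" where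
  "Weyl_Bn \<equiv> refl_group Bn_roots"

lemma Bn_roots_cases:
  assumes "r \<in> Bn_roots"
  obtains (short) i a where "a \<in> {1, -1}" "r = a *\<^sub>R hvec i"
  | (long) i j a b where "i \<noteq> j" "a \<in> {1, -1}" "b \<in> {1, -1}" "r = a *\<^sub>R hvec i + b *\<^sub>R hvec j"
  using assms unfolding Bn_roots_def by (simp only: Un_iff mem_Collect_eq) blast

lemma short_root_in_Bn_roots: "a \<in> {1, -1} \<Longrightarrow> a *\<^sub>R hvec i \<in> Bn_roots"
  unfolding Bn_roots_def by (rule UnI1, simp only: mem_Collect_eq) blast

lemma long_root_in_Bn_roots:
  "i \<noteq> j \<Longrightarrow> a \<in> {1, -1} \<Longrightarrow> b \<in> {1, -1} \<Longrightarrow> a *\<^sub>R hvec i + b *\<^sub>R hvec j \<in> Bn_roots"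
  unfolding Bn_roots_def by (rule UnI2, simp only: mem_Collect_eq) blast

lemma uminus_in_Bn_roots: "r \<in> Bn_roots \<Longrightarrow> - r \<in> Bn_roots"
proof (induction rule: Bn_roots_cases)
  case (short i a)
  then show ?case using short_root_in_Bn_roots[of "- a" i] by auto
next
  case (long i j a b)
  then show ?case using long_root_in_Bn_roots[of i j "- a" "- b"] by auto
qed

lemma Bn_root_nth: "r \<in> Bn_roots \<Longrightarrow> r $ k \<in> {-1, 0, 1}"
  by (induction rule: Bn_roots_cases) (auto simp: hvec_nth)

lemma Bn_root_nonzero: "r \<in> Bn_roots \<Longrightarrow> r \<noteq> 0"
proof (induction rule: Bn_roots_cases)
  case (long i j a b)
  then have "r $ i \<noteq> 0" by (auto simp: hvec_nth)
  then show ?case by auto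
qed auto

lemma Bn_root_inner_self: "r \<in> Bn_roots \<Longrightarrow> r \<bullet> r = 1 \<or> r \<bullet> r = 2"
  by (induction rule: Bn_roots_cases) (auto simp: inner_add_left inner_add_right inner_axis_axis)

text \<open>A positive multiple of a root with entries in \<open>{-1, 0, 1}\<close> is the root itself.\<close>
lemma inj_on_sgn_Bn_roots: "inj_on sgn Bn_roots"
proof (rule inj_onI)
  fix r r' :: "real^'n"
  assume r: "r \<in> Bn_roots" and r': "r' \<in> Bn_roots" and eq: "sgn r = sgn r'"
  define c where "c = norm r / norm r'"
  have "norm r > 0" "norm r' > 0"
    using Bn_root_nonzero r r' by auto
  then have "c > 0"
    by (simp add: c_def)
  have rr: "r = c *\<^sub>R r'"
  proof -
    have "r = norm r *\<^sub>R sgn r"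
      using \<open>norm r > 0\<close> by (simp add: sgn_div_norm)
    also have "sgn r = (1 / norm r') *\<^sub>R r'"
      using eq by (simp add: sgn_div_norm inverse_eq_divide)
    finally show ?thesis
      by (simp add: c_def)
  qed
  obtain k where k: "r' $ k \<noteq> 0"
    using Bn_root_nonzero[OF r'] by (metis vec_eq_iff zero_index)
  have "r $ k = c * r' $ k"
    using rr by simp
  with \<open>c > 0\<close> k Bn_root_nth[OF r, of k] Bn_root_nth[OF r', of k] have "c = 1"
    by auto
  then show "r = r'"
    using rr by simp
qed

lemma reflection_hvec_hvec: "reflection (hvec i) (hvec k) = (if k = i then - hvec i else hvec k)"
  by (simp add: vec_eq_iff reflection_nth inner_axis_axis hvec_nth)

lemma reflection_long_root_hvec:
  assumes "i \<noteq> j" "a \<in> {1, -1}" "b \<in> {1, -1}"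
  shows "reflection (a *\<^sub>R hvec i + b *\<^sub>R hvec j) (hvec k) =
    (if k = i then (- a * b) *\<^sub>R hvec j else if k = j then (- a * b) *\<^sub>R hvec i else hvec k)"
proof -
  have sq: "a * a = 1" "b * b = 1"
    using assms by auto
  have "(a *\<^sub>R hvec i + b *\<^sub>R hvec j) \<bullet> (a *\<^sub>R hvec i + b *\<^sub>R hvec j) = 2"
    using assms sq by (simp add: inner_add_left inner_add_right inner_axis_axis)
  moreover have "hvec k \<bullet> (a *\<^sub>R hvec i + b *\<^sub>R hvec j) =
      (if k = i then a else 0) + (if k = j then b else 0)"
    by (simp add: inner_add_right inner_axis_axis)
  ultimately show ?thesis
    unfolding vec_eq_iff reflection_nth using assms(1) sq by (auto simp: hvec_nth algebra_simps)
qed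

definition signed_basis_map :: "(real^'n \<Rightarrow> real^'n) \<Rightarrow> bool" where
  "signed_basis_map g \<longleftrightarrow> linear g \<and> (\<forall>i. \<exists>j. g (hvec i) = hvec j \<or> g (hvec i) = - hvec j)"

lemma signed_basis_map_reflection:
  assumes "r \<in> Bn_roots"
  shows "signed_basis_map (reflection r)"
  using assms
proof (cases rule: Bn_roots_cases)
  case (short i a)
  then have "reflection r = reflection (hvec i)"
    using reflection_scaleR[of a "hvec i"] by auto
  then show ?thesis
    by (auto simp: signed_basis_map_def linear_reflection reflection_hvec_hvec)
next
  case (long i j a b)
  then have "- a * b = 1 \<or> - a * b = -1"
    by auto
  then show ?thesis
    using long by (auto simp: signed_basis_map_def linear_reflection reflection_long_root_hvec)
qed

lemma signed_basis_map_comp: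
  assumes "signed_basis_map g" "signed_basis_map h"
  shows "signed_basis_map (g \<circ> h)"
proof -
  have "linear g"
    using assms(1) by (simp add: signed_basis_map_def)
  have "\<exists>k. g (h (hvec i)) = hvec k \<or> g (h (hvec i)) = - hvec k" for i
  proof -
    obtain j where "h (hvec i) = hvec j \<or> h (hvec i) = - hvec j"
      using assms(2) by (auto simp: signed_basis_map_def)
    moreover obtain k where "g (hvec j) = hvec k \<or> g (hvec j) = - hvec k"
      using assms(1) by (auto simp: signed_basis_map_def)
    ultimately show ?thesis
      using linear_neg[OF \<open>linear g\<close>, of "hvec j"] by auto
  qed
  then show ?thesis
    using assms by (auto simp: signed_basis_map_def linear_compose)
qed

lemma signed_basis_map_Weyl_Bn: "g \<in> Weyl_Bn \<Longrightarrow> signed_basis_map g"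
proof (induction rule: refl_group.induct)
  case id
  then show ?case by (auto simp: signed_basis_map_def intro!: linearI)
next
  case (step g v)
  then show ?case using signed_basis_map_comp signed_basis_map_reflection by blast
qed

text \<open>A linear map is determined by the images of the basis vectors, of which there are
  finitely many choices.\<close>
lemma finite_signed_basis_maps: "finite {g :: real^'n \<Rightarrow> real^'n. signed_basis_map g}"
proof -
  let ?S = "range hvec \<union> uminus ` range hvec :: (real^'n) set"
  let ?restrict = "\<lambda>g :: real^'n \<Rightarrow> real^'n. \<lambda>i. g (hvec i)"
  have "\<forall>i. g (hvec i) \<in> ?S" if g: "signed_basis_map g" for g :: "real^'n \<Rightarrow> real^'n"
  proof
    fix i
    obtain j where "g (hvec i) = hvec j \<or> g (hvec i) = - hvec j"
      using g unfolding signed_basis_map_def by blast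
    then show "g (hvec i) \<in> ?S"
      by blast
  qed
  then have "?restrict ` {g. signed_basis_map g} \<subseteq> {f. \<forall>i. f i \<in> ?S}"
    by auto
  moreover have "finite {f :: 'n \<Rightarrow> real^'n. \<forall>i. f i \<in> ?S}"
    using finite_set_of_finite_funs[of "UNIV :: 'n set" ?S 0] by simp
  ultimately have "finite (?restrict ` {g. signed_basis_map g})"
    by (rule finite_subset)
  moreover have "inj_on ?restrict {g. signed_basis_map g}"
  proof (rule inj_onI)
    fix g h
    assume "g \<in> {g. signed_basis_map g}" "h \<in> {g. signed_basis_map g}" "?restrict g = ?restrict h"
    then show "g = h"
      by (intro linear_eq_stdbasis) (auto simp: signed_basis_map_def Basis_vec_def fun_eq_iff)
  qed
  ultimately show ?thesis
    using finite_imageD by blast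
qed

lemma finite_Weyl_Bn: "finite (Weyl_Bn :: (real^'n \<Rightarrow> real^'n) set)"
  using finite_subset[OF _ finite_signed_basis_maps] signed_basis_map_Weyl_Bn by blast

lemma sgn_multiple_of_Bn_root:
  assumes "norm u = 1" "u = t *\<^sub>R r" "r \<in> Bn_roots"
  shows "\<exists>r' \<in> Bn_roots. u = sgn r'"
proof -
  have "u = sgn u"
    using assms(1) by (simp add: sgn_div_norm)
  also have "\<dots> = sgn t *\<^sub>R sgn r"
    using assms(2) by (simp add: sgn_scaleR)
  finally have u: "u = sgn t *\<^sub>R sgn r" .
  have "t \<noteq> 0"
    using assms(1,2) by auto
  then have "sgn t = 1 \<or> sgn t = -1"
    by (simp add: sgn_real_def)
  then have "u = sgn r \<or> u = sgn (- r)"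
    using u by (auto simp: sgn_minus)
  then show ?thesis
    using assms(3) uminus_in_Bn_roots by blast
qed

text \<open>If \<open>reflection u\<close> is a signed basis map, then \<open>reflection u (hvec k) = hvec k - 2 u\<^sub>k u\<close>
  is \<open>\<plusminus>hvec j\<close>, so \<open>u\<close> is proportional to \<open>hvec k \<mp> hvec j\<close>.\<close>
lemma unit_vector_sgn_Bn_root:
  fixes u :: "real^'n"
  assumes norm_u: "norm u = 1" and refl_u: "signed_basis_map (reflection u)"
  shows "\<exists>r \<in> Bn_roots. u = sgn r"
proof -
  obtain k where k: "u $ k \<noteq> 0"
    using norm_u by (metis norm_zero vec_eq_iff zero_index zero_neq_one)
  have "reflection u (hvec k) = hvec k - (2 * u $ k) *\<^sub>R u"
    using norm_u by (simp add: reflection_def inner_axis' norm_eq_1)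
  moreover obtain j where "reflection u (hvec k) = hvec j \<or> reflection u (hvec k) = - hvec j"
    using refl_u unfolding signed_basis_map_def by blast
  ultimately obtain \<sigma> :: real where \<sigma>: "\<sigma> \<in> {1, -1}" "hvec k - (2 * u $ k) *\<^sub>R u = \<sigma> *\<^sub>R hvec j"
    by (metis insertCI scaleR_minus1_left scaleR_one)
  then have "(2 * u $ k) *\<^sub>R u = hvec k - \<sigma> *\<^sub>R hvec j"
    by (simp add: algebra_simps)
  then have u: "u = (1 / (2 * u $ k)) *\<^sub>R (hvec k - \<sigma> *\<^sub>R hvec j)"
    using k by (metis (no_types, lifting) divide_self_if mult_eq_0_iff nonzero_divide_eq_eq
        scaleR_scaleR scaleR_one zero_neq_numeral)
  show ?thesis
  proof (cases "j = k")
    case True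
    have "\<sigma> \<noteq> 1"
    proof
      assume "\<sigma> = 1"
      then have "u = 0"
        using u True by simp
      then show False
        using norm_u by simp
    qed
    then have "u = (1 / u $ k) *\<^sub>R (1 *\<^sub>R hvec k)"
      using u True \<sigma>(1) by (simp add: scaleR_2[symmetric])
    then show ?thesis
      using sgn_multiple_of_Bn_root[OF norm_u] short_root_in_Bn_roots[of 1 k] by blast
  next
    case False
    then have "1 *\<^sub>R hvec k + (- \<sigma>) *\<^sub>R hvec j \<in> Bn_roots"
      using \<sigma>(1) by (intro long_root_in_Bn_roots) auto
    moreover have "hvec k - \<sigma> *\<^sub>R hvec j = 1 *\<^sub>R hvec k + (- \<sigma>) *\<^sub>R hvec j"
      by simp
    ultimately show ?thesis
      using sgn_multiple_of_Bn_root[OF norm_u] u by metis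
  qed
qed

lemma realizes_iff: "realizes F G \<longleftrightarrow> G \<subseteq> Bn_roots \<and> F = sgn ` G"
  by (simp add: realizes_def sgn_div_norm inverse_eq_divide)

lemma refl_group_realized: "realizes F G \<Longrightarrow> refl_group F = refl_group G"
  by (simp add: realizes_iff refl_group_sgn_image)

lemma refl_group_realized_subset:
  assumes "realizes F G"
  shows "refl_group F \<subseteq> Weyl_Bn"
  unfolding refl_group_realized[OF assms] using assms by (simp add: realizes_iff refl_group_mono)

lemma simplex_family_norm: "simplex_family F \<Longrightarrow> v \<in> F \<Longrightarrow> norm v = 1"
  unfolding simplex_family_def by auto

lemma simplex_family_image:
  fixes Q :: "real^'n \<Rightarrow> real^'n"
  assumes F: "simplex_family F" and Q: "orthogonal_transformation Q"
  shows "simplex_family (Q ` F)"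
proof -
  obtain f :: "'n \<Rightarrow> real^'n" where f: "\<forall>i. norm (f i) = 1" "inj f" "independent (range f)"
    and F_eq: "F = range f \<union> uminus ` range f"
    using F unfolding simplex_family_def by blast
  have lin: "linear Q" and "inj Q"
    using Q orthogonal_transformation_linear orthogonal_transformation_inj by blast+
  have "\<forall>i. norm ((Q \<circ> f) i) = 1"
    using f(1) orthogonal_transformation_norm[OF Q] by simp
  moreover have "inj (Q \<circ> f)"
    using f(2) \<open>inj Q\<close> by (simp add: inj_compose)
  moreover have "independent (range (Q \<circ> f))"
    using linear_independent_injective_image[OF lin f(3)] \<open>inj Q\<close>
    by (simp add: inj_on_subset image_comp)
  moreover have "Q ` uminus ` range f = uminus ` range (Q \<circ> f)"
    using linear_neg[OF lin] by (auto simp: image_iff)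
  then have "Q ` F = range (Q \<circ> f) \<union> uminus ` range (Q \<circ> f)"
    using F_eq by (simp add: image_Un image_comp)
  ultimately show ?thesis
    unfolding simplex_family_def by blast
qed

lemma inj_conjugation:
  fixes Q :: "real^'n \<Rightarrow> real^'n"
  assumes "orthogonal_transformation Q"
  shows "inj (\<lambda>g. Q \<circ> g \<circ> inv Q)"
proof (rule injI)
  fix g h :: "real^'n \<Rightarrow> real^'n"
  assume "Q \<circ> g \<circ> inv Q = Q \<circ> h \<circ> inv Q"
  then have "inv Q \<circ> (Q \<circ> g \<circ> inv Q) \<circ> Q = inv Q \<circ> (Q \<circ> h \<circ> inv Q) \<circ> Q"
    by simp
  then show "g = h"
    by (simp add: fun_eq_iff orthogonal_transformation_inv_f_f[OF assms])
qed

lemma generates_Bn_image: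
  fixes F :: "(real^'n) set" and Q :: "real^'n \<Rightarrow> real^'n"
  assumes F: "generates_Bn F" and Q: "orthogonal_transformation Q"
  shows "generates_Bn (Q ` F)"
proof -
  obtain P :: "real^'n \<Rightarrow> real^'n" where P: "orthogonal_transformation P"
    and RG: "refl_group F = (\<lambda>g. P \<circ> g \<circ> inv P) ` Weyl_Bn"
    using F unfolding generates_Bn_def by blast
  have "refl_group (Q ` F) = (\<lambda>g. Q \<circ> g \<circ> inv Q) ` (\<lambda>g. P \<circ> g \<circ> inv P) ` Weyl_Bn"
    using refl_group_image[OF Q] RG by simp
  also have "\<dots> = (\<lambda>g. (Q \<circ> P) \<circ> g \<circ> inv (Q \<circ> P)) ` Weyl_Bn"
    using o_inv_distrib[OF orthogonal_transformation_bij[OF Q] orthogonal_transformation_bij[OF P]]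
    by (simp add: image_image comp_assoc)
  finally have "refl_group (Q ` F) = (\<lambda>g. (Q \<circ> P) \<circ> g \<circ> inv (Q \<circ> P)) ` Weyl_Bn" .
  moreover have "simplex_family (Q ` F)"
    using F simplex_family_image[OF _ Q] by (simp add: generates_Bn_def)
  ultimately show ?thesis
    unfolding generates_Bn_def using orthogonal_transformation_compose[OF Q P] by blast
qed

lemma generates_Bn_isometric_realized:
  fixes F :: "(real^'n) set"
  assumes F: "generates_Bn F"
  shows "\<exists>F' G. isometric_families F F' \<and> realizes F' G"
proof -
  obtain Q :: "real^'n \<Rightarrow> real^'n" where Q: "orthogonal_transformation Q"
    and RG: "refl_group F = (\<lambda>g. Q \<circ> g \<circ> inv Q) ` Weyl_Bn"
    using F unfolding generates_Bn_def by blast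
  define P where "P = inv Q"
  have P: "orthogonal_transformation P"
    using Q orthogonal_transformation_inv P_def by blast
  have roots: "\<exists>r \<in> Bn_roots. P v = sgn r" if v: "v \<in> F" for v
  proof -
    obtain w where w: "w \<in> Weyl_Bn" "reflection v = Q \<circ> w \<circ> inv Q"
      using RG reflection_in_refl_group[OF v] by blast
    have "reflection (P v) = P \<circ> reflection v \<circ> inv P"
      using reflection_conjugate[OF P] by simp
    also have "\<dots> = w"
      using w(2) inv_inv_eq[OF orthogonal_transformation_bij[OF Q]]
      by (simp add: P_def fun_eq_iff orthogonal_transformation_inv_f_f[OF Q])
    finally have "signed_basis_map (reflection (P v))"
      using signed_basis_map_Weyl_Bn w(1) by simp
    moreover have "norm (P v) = 1"
      using simplex_family_norm[OF _ v] F orthogonal_transformation_norm[OF P]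
      by (simp add: generates_Bn_def)
    ultimately show ?thesis
      using unit_vector_sgn_Bn_root by blast
  qed
  have "P ` F \<subseteq> sgn ` {r \<in> Bn_roots. sgn r \<in> P ` F}"
  proof
    fix x
    assume x: "x \<in> P ` F"
    then obtain r where "r \<in> Bn_roots" "x = sgn r"
      using roots by blast
    then show "x \<in> sgn ` {r \<in> Bn_roots. sgn r \<in> P ` F}"
      using x by blast
  qed
  then have "realizes (P ` F) {r \<in> Bn_roots. sgn r \<in> P ` F}"
    unfolding realizes_iff by blast
  moreover have "isometric_families F (P ` F)"
    unfolding isometric_families_def using P by blast
  ultimately show ?thesis
    by blast
qed

text \<open>Both groups have the same finite order, and one contains the other.\<close>
lemma refl_group_eq_Weyl_Bn:
  fixes F :: "(real^'n) set"
  assumes F: "generates_Bn F" and G: "realizes F G"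
  shows "refl_group F = Weyl_Bn"
proof -
  obtain Q :: "real^'n \<Rightarrow> real^'n" where Q: "orthogonal_transformation Q"
    and RG: "refl_group F = (\<lambda>g. Q \<circ> g \<circ> inv Q) ` Weyl_Bn"
    using F unfolding generates_Bn_def by blast
  have "card (refl_group F) = card (Weyl_Bn :: (real^'n \<Rightarrow> real^'n) set)"
    unfolding RG using inj_conjugation[OF Q] by (simp add: card_image inj_on_subset)
  then show ?thesis
    using card_subset_eq[OF finite_Weyl_Bn refl_group_realized_subset[OF G]] by simp
qed

lemma refl_group_realizing_roots:
  "generates_Bn F \<Longrightarrow> realizes F G \<Longrightarrow> refl_group G = Weyl_Bn"
  using refl_group_eq_Weyl_Bn refl_group_realized by metis

lemma Weyl_Bn_conjugation_invariant:
  fixes Q :: "real^'n \<Rightarrow> real^'n"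
  assumes F: "generates_Bn F" "realizes F G" and Q: "orthogonal_transformation Q"
    and G': "realizes (Q ` F) G'"
  shows "(\<lambda>g. Q \<circ> g \<circ> inv Q) ` Weyl_Bn = Weyl_Bn"
  using refl_group_image[OF Q, of F] refl_group_eq_Weyl_Bn[OF F]
    refl_group_eq_Weyl_Bn[OF generates_Bn_image[OF F(1) Q] G']
  by simp

definition pm_closure :: "(real^'n) set \<Rightarrow> (real^'n) set" where
  "pm_closure G = G \<union> uminus ` G"

lemma pm_closure_iff: "x \<in> pm_closure G \<longleftrightarrow> x \<in> G \<or> - x \<in> G"
  unfolding pm_closure_def by (metis Un_iff image_iff minus_minus)

lemma uminus_in_pm_closure_iff: "- x \<in> pm_closure G \<longleftrightarrow> x \<in> pm_closure G"
  by (auto simp: pm_closure_iff)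

lemma sign_scaleR_in_pm_closure_iff:
  "c \<in> {1, -1} \<Longrightarrow> c *\<^sub>R x \<in> pm_closure G \<longleftrightarrow> x \<in> pm_closure G"
  by (auto simp: uminus_in_pm_closure_iff)

lemma Bn_edges_pm_closure: "Bn_edges (pm_closure G) = Bn_edges G"
proof -
  have "(x \<in> pm_closure G \<or> - x \<in> pm_closure G) \<longleftrightarrow> (x \<in> G \<or> - x \<in> G)" for x
    by (auto simp: pm_closure_iff)
  then show ?thesis
    by (intro ext) (simp only: Bn_edges_def)
qed

lemma Bn_marked_pm_closure: "Bn_marked (pm_closure G) = Bn_marked G"
proof -
  have "(x \<in> pm_closure G \<or> - x \<in> pm_closure G) \<longleftrightarrow> (x \<in> G \<or> - x \<in> G)" for x
    by (auto simp: pm_closure_iff)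
  then show ?thesis
    by (simp only: Bn_marked_def)
qed

lemma pm_closure_subset_Bn_roots: "G \<subseteq> Bn_roots \<Longrightarrow> pm_closure G \<subseteq> Bn_roots"
  by (auto simp: pm_closure_def uminus_in_Bn_roots)

lemma sgn_pm_closure: "sgn ` pm_closure G = pm_closure (sgn ` G)"
  by (simp add: pm_closure_def image_Un image_image sgn_minus)

lemma pm_closure_subset: "A \<subseteq> pm_closure B \<Longrightarrow> pm_closure A \<subseteq> pm_closure B"
  by (metis pm_closure_iff subset_iff uminus_in_pm_closure_iff)

lemma pm_closure_idem: "pm_closure (pm_closure G) = pm_closure G"
  by (auto simp: pm_closure_iff)

lemma simplex_family_iff:
  "simplex_family F \<longleftrightarrow> (\<exists>f :: 'n \<Rightarrow> real^'n.
      (\<forall>i. norm (f i) = 1) \<and> inj f \<and> independent (range f) \<and> F = pm_closure (range f))"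
  by (simp add: simplex_family_def pm_closure_def)

lemma sgn_image_pm_closure_realized:
  fixes F :: "(real^'n) set"
  assumes "simplex_family F" "realizes F G"
  shows "sgn ` pm_closure G = F"
proof -
  obtain f :: "'n \<Rightarrow> real^'n" where "F = pm_closure (range f)"
    using assms(1) by (auto simp: simplex_family_iff)
  then have "pm_closure F = F"
    by (simp add: pm_closure_idem)
  then show ?thesis
    using assms(2) by (simp add: realizes_iff sgn_pm_closure)
qed

lemma card_pm_closure_independent:
  assumes B: "independent B"
  shows "card (pm_closure B) = 2 * card B"
proof -
  have "finite B"
    using B independent_bound_general by blast
  have "B \<inter> uminus ` B = {}"
  proof (rule ccontr)
    assume "B \<inter> uminus ` B \<noteq> {}"
    then obtain b b' where b: "b \<in> B" "b' \<in> B" "b = - b'"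
      by auto
    show False
    proof (cases "b = b'")
      case True
      then have "b = 0"
        using b(3) by (simp add: vec_eq_iff)
      then show False
        using b(1) B dependent_zero by blast
    next
      case False
      then have "b' \<in> B - {b}"
        using b by auto
      then have "b \<in> span (B - {b})"
        unfolding b(3) by (intro span_neg span_base)
      then show False
        using B b(1) dependent_def by blast
    qed
  qed
  then show ?thesis
    using \<open>finite B\<close> by (simp add: pm_closure_def card_Un_disjoint card_image)
qed

lemma card_simplex_family:
  fixes F :: "(real^'n) set"
  assumes "simplex_family F"
  shows "card F = 2 * CARD('n)"
proof -
  obtain f :: "'n \<Rightarrow> real^'n" where "inj f" "independent (range f)" "F = pm_closure (range f)"
    using assms unfolding simplex_family_iff by blast
  then show ?thesis
    by (simp add: card_pm_closure_independent card_image)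
qed

lemma card_pm_closure_realized:
  fixes F :: "(real^'n) set"
  assumes "simplex_family F" "realizes F G"
  shows "card (pm_closure G) = 2 * CARD('n)"
proof -
  have "pm_closure G \<subseteq> Bn_roots"
    using assms(2) by (intro pm_closure_subset_Bn_roots) (simp add: realizes_iff)
  then have "card (sgn ` pm_closure G) = card (pm_closure G)"
    by (intro card_image inj_on_subset[OF inj_on_sgn_Bn_roots])
  then show ?thesis
    using sgn_image_pm_closure_realized[OF assms] card_simplex_family[OF assms(1)] by simp
qed

lemma Bn_edges_eq_card:
  "i \<noteq> j \<Longrightarrow> Bn_edges G i j = card {s \<in> {1, -1}. hvec i + s *\<^sub>R hvec j \<in> pm_closure G}"
  by (simp add: Bn_edges_def pm_closure_iff)

lemma Bn_edges_diag: "Bn_edges G i i = 0"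
  by (simp add: Bn_edges_def)

lemma Bn_marked_iff: "i \<in> Bn_marked G \<longleftrightarrow> hvec i \<in> pm_closure G"
  by (simp add: Bn_marked_def pm_closure_iff)

lemma Bn_edges_pos_iff:
  assumes "i \<noteq> j"
  shows "Bn_edges G i j > 0 \<longleftrightarrow> (\<exists>s \<in> {1, -1}. hvec i + s *\<^sub>R hvec j \<in> pm_closure G)"
proof -
  have "finite {s \<in> {1, -1 :: real}. hvec i + s *\<^sub>R hvec j \<in> pm_closure G}"
    by simp
  then show ?thesis
    unfolding Bn_edges_eq_card[OF assms] card_gt_0_iff by blast
qed

lemma Bn_edges_commute: "Bn_edges G i j = Bn_edges G j i"
proof (cases "i = j")
  case False
  have "hvec i + s *\<^sub>R hvec j \<in> pm_closure G \<longleftrightarrow> hvec j + s *\<^sub>R hvec i \<in> pm_closure G"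
    if "s \<in> {1, -1}" for s
  proof -
    from that consider "s = 1" | "s = -1"
      by blast
    then show ?thesis
    proof cases
      case 1
      then show ?thesis by (simp add: add.commute)
    next
      case 2
      then have "hvec j + s *\<^sub>R hvec i = - (hvec i + s *\<^sub>R hvec j)"
        by simp
      then show ?thesis
        by (simp only: uminus_in_pm_closure_iff)
    qed
  qed
  then have "{s \<in> {1, -1}. hvec i + s *\<^sub>R hvec j \<in> pm_closure G} =
      {s \<in> {1, -1}. hvec j + s *\<^sub>R hvec i \<in> pm_closure G}"
    by blast
  then show ?thesis
    using False by (simp add: Bn_edges_eq_card)
qed simp

lemma adj_Bn_edges_commute: "adj (Bn_edges G) i j \<longleftrightarrow> adj (Bn_edges G) j i"
  unfolding adj_def by (simp add: Bn_edges_commute)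

lemma Bn_root_support_in_component:
  assumes r: "r \<in> G" and G: "G \<subseteq> Bn_roots"
    and closed: "\<And>i j. adj (Bn_edges G) i j \<Longrightarrow> i \<in> C \<Longrightarrow> j \<in> C"
  shows "(\<forall>t. r $ t \<noteq> 0 \<longrightarrow> t \<in> C) \<or> (\<forall>t. r $ t \<noteq> 0 \<longrightarrow> t \<notin> C)"
proof -
  have "r \<in> Bn_roots"
    using G r by blast
  then show ?thesis
  proof (cases rule: Bn_roots_cases)
    case (short i a)
    then show ?thesis by (auto simp: hvec_nth)
  next
    case (long i j a b)
    have "a * a = 1"
      using long by auto
    then have "hvec i + (a * b) *\<^sub>R hvec j = a *\<^sub>R r"
      using long(4) by (simp add: algebra_simps)
    moreover have "r \<in> pm_closure G"
      using r by (simp add: pm_closure_def)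
    then have "a *\<^sub>R r \<in> pm_closure G"
      using long(2) sign_scaleR_in_pm_closure_iff by blast
    moreover have "a * b \<in> {1, -1}"
      using long by auto
    ultimately have "adj (Bn_edges G) i j"
      unfolding adj_def using Bn_edges_pos_iff[OF long(1)] by auto
    then have "i \<in> C \<longleftrightarrow> j \<in> C"
      using closed adj_Bn_edges_commute by metis
    then show ?thesis
      using long by (auto simp: hvec_nth)
  qed
qed

text \<open>Otherwise the coordinate subspace of a connected component would be invariant under
  the group, but the reflection in \<open>hvec a - hvec b\<close> exchanges \<open>hvec a\<close> and \<open>hvec b\<close>.\<close>
lemma Bn_graph_connected:
  fixes G :: "(real^'n) set"
  assumes G: "G \<subseteq> Bn_roots" and W: "refl_group G = Weyl_Bn"
  shows "(adj (Bn_edges G))\<^sup>*\<^sup>* a b"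
proof (rule ccontr)
  assume not_conn: "\<not> (adj (Bn_edges G))\<^sup>*\<^sup>* a b"
  define C where "C = {j. (adj (Bn_edges G))\<^sup>*\<^sup>* a j}"
  define V where "V = {x :: real^'n. \<forall>t. t \<notin> C \<longrightarrow> x $ t = 0}"
  have closed: "adj (Bn_edges G) i j \<Longrightarrow> i \<in> C \<Longrightarrow> j \<in> C" for i j
    unfolding C_def by (auto intro: rtranclp.rtrancl_into_rtrancl)
  have V_invariant: "reflection r x \<in> V" if r: "r \<in> G" and x: "x \<in> V" for r x
    using Bn_root_support_in_component[OF r G closed]
  proof
    assume "\<forall>t. r $ t \<noteq> 0 \<longrightarrow> t \<in> C"
    then show ?thesis
      using x unfolding V_def by (auto simp: reflection_nth)
  next
    assume r_outside: "\<forall>t. r $ t \<noteq> 0 \<longrightarrow> t \<notin> C"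
    have "x \<bullet> r = 0"
      unfolding inner_vec_def using r_outside x
      by (intro sum.neutral) (auto simp: V_def)
    then show ?thesis
      using x by (simp add: reflection_def)
  qed
  have "a \<noteq> b"
    using not_conn by auto
  then have "reflection (hvec a - hvec b) \<in> refl_group G"
    using W long_root_in_Bn_roots[of a b 1 "-1"] reflection_in_refl_group by fastforce
  moreover have "hvec a \<in> V"
    unfolding V_def C_def by (auto simp: hvec_nth)
  ultimately have "reflection (hvec a - hvec b) (hvec a) \<in> V"
    using refl_group_invariant[where P = "\<lambda>x. x \<in> V"] V_invariant by blast
  moreover have "reflection (hvec a - hvec b) (hvec a) = hvec b"
    using reflection_long_root_hvec[of a b 1 "-1" a] \<open>a \<noteq> b\<close> by simp
  moreover have "hvec b \<notin> V"
    using not_conn unfolding V_def C_def by (auto simp: hvec_nth)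
  ultimately show False
    by simp
qed

lemma prod_UNIV_remove_two:
  fixes f :: "'n::finite \<Rightarrow> real"
  assumes "i \<noteq> j"
  shows "(\<Prod>t\<in>UNIV. f t) = f i * f j * (\<Prod>t\<in>UNIV - {i, j}. f t)"
proof -
  have "(\<Prod>t\<in>UNIV. f t) = f i * (\<Prod>t\<in>UNIV - {i}. f t)"
    by (simp add: prod.remove)
  also have "(\<Prod>t\<in>UNIV - {i}. f t) = f j * (\<Prod>t\<in>UNIV - {i} - {j}. f t)"
    using assms by (intro prod.remove) auto
  finally show ?thesis
    by (simp add: Diff_insert2[symmetric] insert_commute)
qed

text \<open>Without short roots the product of the coordinates would be invariant under the group,
  since a reflection in a long root swaps two coordinates and multiplies both by the same sign;
  but the reflection in \<open>hvec a\<close> changes its sign.\<close>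
lemma Bn_marked_nonempty:
  fixes G :: "(real^'n) set"
  assumes G: "G \<subseteq> Bn_roots" and W: "refl_group G = Weyl_Bn"
  shows "Bn_marked G \<noteq> {}"
proof
  assume no_mark: "Bn_marked G = {}"
  define P where "P = (\<lambda>x :: real^'n. \<Prod>t\<in>UNIV. x $ t)"
  have P_invariant: "P (reflection r y) = P y" if r: "r \<in> G" for r y
    using subsetD[OF G r]
  proof (cases rule: Bn_roots_cases)
    case (short i a)
    then have "hvec i \<in> pm_closure G"
      using r sign_scaleR_in_pm_closure_iff[of a "hvec i" G] by (auto simp: pm_closure_def)
    then show ?thesis
      using no_mark Bn_marked_iff by blast
  next
    case (long i j a b)
    have sq: "a * a = 1" "b * b = 1"
      using long by auto
    have rr: "r \<bullet> r = 2"
      using long sq by (simp add: inner_add_left inner_add_right inner_axis_axis)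
    have yr: "y \<bullet> r = a * y $ i + b * y $ j"
      using long(4) by (simp add: inner_add_right inner_axis)
    have ri: "r $ i = a" "r $ j = b"
      using long by (simp_all add: hvec_nth)
    have "reflection r y $ i = - (a * b) * y $ j" "reflection r y $ j = - (a * b) * y $ i"
      using sq by (simp_all add: reflection_nth rr yr ri algebra_simps)
    moreover have "(\<Prod>t\<in>UNIV - {i, j}. reflection r y $ t) = (\<Prod>t\<in>UNIV - {i, j}. y $ t)"
      using long(4) by (intro prod.cong) (simp_all add: reflection_nth hvec_nth)
    ultimately show ?thesis
      unfolding P_def prod_UNIV_remove_two[OF long(1)] using sq by (simp add: algebra_simps)
  qed
  obtain a :: 'n where True
    by simp
  have "reflection (hvec a) \<in> refl_group G"
    using W short_root_in_Bn_roots[of 1 a] reflection_in_refl_group by fastforce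
  then have "P (reflection (hvec a) (\<chi> t. 1)) = P (\<chi> t. 1)"
    by (rule refl_group_invariant[where P = "\<lambda>y. P y = P (\<chi> t. 1)"]) (simp_all add: P_invariant)
  moreover have "reflection (hvec a) (\<chi> t. 1) $ t = (if t = a then -1 else 1)" for t
    by (simp add: reflection_nth inner_axis hvec_nth)
  then have "P (reflection (hvec a) (\<chi> t. 1)) = -1"
    unfolding P_def by (simp add: prod.If_cases)
  ultimately show False
    unfolding P_def by simp
qed

section \<open>Rooted trees given by parent pointers\<close>

definition rooted_tree :: "'a \<Rightarrow> ('a \<Rightarrow> 'a) \<Rightarrow> ('a \<Rightarrow> nat) \<Rightarrow> bool" where
  "rooted_tree m p d \<longleftrightarrow> p m = m \<and> d m = 0 \<and> (\<forall>v. v \<noteq> m \<longrightarrow> d v = Suc (d (p v)))"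

lemma rooted_tree_root: "rooted_tree m p d \<Longrightarrow> p m = m \<and> d m = 0"
  by (simp add: rooted_tree_def)

lemma rooted_tree_depth_parent: "rooted_tree m p d \<Longrightarrow> v \<noteq> m \<Longrightarrow> d v = Suc (d (p v))"
  by (simp add: rooted_tree_def)

lemma rooted_tree_depth_eq_0_iff: "rooted_tree m p d \<Longrightarrow> d v = 0 \<longleftrightarrow> v = m"
  unfolding rooted_tree_def by (cases "v = m") auto

lemma rooted_tree_parent_neq: "rooted_tree m p d \<Longrightarrow> v \<noteq> m \<Longrightarrow> p v \<noteq> v"
  by (metis n_not_Suc_n rooted_tree_depth_parent)

lemma rooted_tree_parent_asym:
  "rooted_tree m p d \<Longrightarrow> v \<noteq> m \<Longrightarrow> w \<noteq> m \<Longrightarrow> w = p v \<Longrightarrow> v \<noteq> p w"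
  by (metis Suc_n_not_le_n le_Suc_eq rooted_tree_depth_parent)

lemma rooted_tree_induct [consumes 1, case_names root parent]:
  assumes T: "rooted_tree m p d" and root: "P m" and parent: "\<And>v. v \<noteq> m \<Longrightarrow> P (p v) \<Longrightarrow> P v"
  shows "P v"
proof (induction "d v" arbitrary: v rule: less_induct)
  case less
  show ?case
  proof (cases "v = m")
    case True
    with root show ?thesis by simp
  next
    case False
    then have "d (p v) < d v"
      using rooted_tree_depth_parent[OF T] by simp
    with less parent False show ?thesis
      by blast
  qed
qed

lemma rooted_tree_depth_funpow:
  assumes T: "rooted_tree m p d"
  shows "d ((p ^^ k) v) = d v - k"
proof (induction k)
  case (Suc k)
  show ?case
  proof (cases "(p ^^ k) v = m")
    case True
    then show ?thesis
      using Suc rooted_tree_root[OF T] by simp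
  next
    case False
    then show ?thesis
      using Suc rooted_tree_depth_parent[OF T False] by simp
  qed
qed simp

lemma rooted_tree_funpow_eq_root_iff: "rooted_tree m p d \<Longrightarrow> (p ^^ k) v = m \<longleftrightarrow> d v \<le> k"
  using rooted_tree_depth_funpow rooted_tree_depth_eq_0_iff by (metis diff_is_0_eq)

lemma rooted_tree_funpow_neq:
  assumes T: "rooted_tree m p d" and "k < l" "(p ^^ k) v \<noteq> m"
  shows "(p ^^ k) v \<noteq> (p ^^ l) v"
proof -
  have "k < d v"
    using assms rooted_tree_funpow_eq_root_iff[OF T] by simp
  then have "d ((p ^^ k) v) \<noteq> d ((p ^^ l) v)"
    using \<open>k < l\<close> by (simp add: rooted_tree_depth_funpow[OF T])
  then show ?thesis
    by metis
qed

lemma exists_rooted_tree: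
  assumes conn: "\<And>v. R\<^sup>*\<^sup>* m v"
  shows "\<exists>p d. rooted_tree m p d \<and> (\<forall>v. v \<noteq> m \<longrightarrow> R (p v) v)"
proof -
  define d where "d v = (LEAST k. (R ^^ k) m v)" for v
  have path: "(R ^^ d v) m v" for v
    unfolding d_def using rtranclp_imp_relpowp[OF conn[of v]] by (rule LeastI_ex)
  have shortest: "(R ^^ k) m v \<Longrightarrow> d v \<le> k" for k v
    unfolding d_def by (rule Least_le)
  define p where "p v = (if v = m then m else SOME u. (R ^^ (d v - 1)) m u \<and> R u v)" for v
  have parent: "R (p v) v \<and> d v = Suc (d (p v))" if "v \<noteq> m" for v
  proof -
    have "d v \<noteq> 0"
      using path[of v] that by (metis relpowp_0_E)
    then obtain k where k: "d v = Suc k"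
      using not0_implies_Suc by blast
    then obtain u where "(R ^^ k) m u" "R u v"
      using path[of v] by (metis relpowp_Suc_E)
    then have "(R ^^ k) m (p v) \<and> R (p v) v"
      unfolding p_def using that k someI_ex[of "\<lambda>u. (R ^^ (d v - 1)) m u \<and> R u v"] by auto
    moreover from this have "d v \<le> Suc (d (p v))"
      using shortest relpowp_Suc_I[OF path[of "p v"]] by blast
    ultimately show ?thesis
      using shortest k by fastforce
  qed
  have "rooted_tree m p d"
    unfolding rooted_tree_def using shortest[of 0 m] parent by (simp add: p_def)
  then show ?thesis
    using parent by blast
qed

lemma rooted_tree_prod_path:
  assumes T: "rooted_tree m p d" and "v \<noteq> m"
  shows "(\<Prod>k<d v. c ((p ^^ k) v)) = c v * (\<Prod>k<d (p v). c ((p ^^ k) (p v)))"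
proof -
  have "(\<Prod>k<d v. c ((p ^^ k) v)) = c ((p ^^ 0) v) * (\<Prod>k<d (p v). c ((p ^^ Suc k) v))"
    unfolding rooted_tree_depth_parent[OF assms] by (rule prod.lessThan_Suc_shift)
  then show ?thesis
    by (simp add: funpow_Suc_right del: funpow.simps)
qed

definition parent_graph :: "'a \<Rightarrow> ('a \<Rightarrow> 'a) \<Rightarrow> 'a \<Rightarrow> 'a \<Rightarrow> nat" where
  "parent_graph m p i j = (if (i \<noteq> m \<and> j = p i) \<or> (j \<noteq> m \<and> i = p j) then 1 else 0)"

lemma parent_graph_commute: "parent_graph m p i j = parent_graph m p j i"
  unfolding parent_graph_def by (simp only: disj_commute)

lemma parent_graph_diag: "rooted_tree m p d \<Longrightarrow> parent_graph m p v v = 0"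
  unfolding parent_graph_def using rooted_tree_parent_neq[of m p d v] by auto

lemma adj_parent_graph_iff:
  "adj (parent_graph m p) u w \<longleftrightarrow> (u \<noteq> m \<and> w = p u) \<or> (w \<noteq> m \<and> u = p w)"
  by (simp add: adj_def parent_graph_def)

lemma has_cycle_cyclicE:
  assumes "has_cycle E"
  obtains vs where "3 \<le> length vs" "distinct vs"
    "\<And>k. k < length vs \<Longrightarrow> adj E (vs ! k) (vs ! (Suc k mod length vs))"
proof -
  obtain vs where len: "length vs \<ge> 3" and "distinct vs"
    and steps: "\<forall>k. Suc k < length vs \<longrightarrow> adj E (vs ! k) (vs ! Suc k)"
    and closing: "adj E (last vs) (hd vs)"
    using assms unfolding has_cycle_def by blast
  have "adj E (vs ! k) (vs ! (Suc k mod length vs))" if "k < length vs" for k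
  proof (cases "Suc k < length vs")
    case True
    then show ?thesis using steps by simp
  next
    case False
    then have "Suc k = length vs"
      using that by simp
    then have "k = length vs - 1" "Suc k mod length vs = 0"
      by simp_all
    moreover have "vs \<noteq> []"
      using len by auto
    ultimately have "vs ! k = last vs" "vs ! (Suc k mod length vs) = hd vs"
      by (simp_all add: last_conv_nth hd_conv_nth)
    then show ?thesis
      using closing by simp
  qed
  then show ?thesis
    using that len \<open>distinct vs\<close> by blast
qed

text \<open>On a cycle, a vertex of maximal depth has two distinct neighbours of smaller or equal
  depth, but only its parent qualifies.\<close>
lemma parent_graph_no_cycle:
  assumes T: "rooted_tree m p d"
  shows "\<not> has_cycle (parent_graph m p)"
proof
  assume "has_cycle (parent_graph m p)"
  then obtain vs where len: "3 \<le> length vs" and "distinct vs"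
    and cyc: "\<And>k. k < length vs \<Longrightarrow> adj (parent_graph m p) (vs ! k) (vs ! (Suc k mod length vs))"
    by (rule has_cycle_cyclicE) blast
  define L where "L = length vs"
  have "finite (d ` set vs)" "d ` set vs \<noteq> {}"
    using len by auto
  then obtain k0 where k0: "k0 < L" "d (vs ! k0) = Max (d ` set vs)"
    using Max_in by (metis L_def imageE in_set_conv_nth)
  have deepest: "d (vs ! k) \<le> d (vs ! k0)" if "k < L" for k
    using k0(2) \<open>finite (d ` set vs)\<close> that by (simp add: L_def)
  have to_parent: "w = p (vs ! k0)" if "adj (parent_graph m p) (vs ! k0) w" "d w \<le> d (vs ! k0)" for w
    using that rooted_tree_depth_parent[OF T, of w] by (auto simp: adj_parent_graph_iff)
  define a where "a = Suc k0 mod L"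
  define b where "b = (if k0 = 0 then L - 1 else k0 - 1)"
  have "a < L" "b < L" "Suc b mod L = k0" "a \<noteq> b"
    using k0(1) len unfolding a_def b_def L_def by (auto simp: mod_Suc)
  have "adj (parent_graph m p) (vs ! k0) (vs ! a)"
    using cyc k0(1) unfolding a_def L_def by blast
  then have "vs ! a = p (vs ! k0)"
    using to_parent deepest[OF \<open>a < L\<close>] by blast
  have "adj (parent_graph m p) (vs ! k0) (vs ! b)"
    using cyc[of b] \<open>b < L\<close> \<open>Suc b mod L = k0\<close>
    by (simp add: L_def adj_def parent_graph_commute)
  then have "vs ! b = p (vs ! k0)"
    using to_parent deepest[OF \<open>b < L\<close>] by blast
  then have "vs ! a = vs ! b"
    using \<open>vs ! a = p (vs ! k0)\<close> by simp
  then show False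
    using \<open>distinct vs\<close> \<open>a < L\<close> \<open>b < L\<close> \<open>a \<noteq> b\<close> by (simp add: L_def nth_eq_iff_index_eq)
qed

lemma is_tree_parent_graph:
  assumes T: "rooted_tree m p d"
  shows "is_tree (parent_graph m p)"
proof -
  have from_root: "(adj (parent_graph m p))\<^sup>*\<^sup>* m v" for v
    using T
  proof (induction v rule: rooted_tree_induct)
    case (parent v)
    then show ?case
      by (auto simp: adj_parent_graph_iff intro: rtranclp.rtrancl_into_rtrancl)
  qed simp
  have "symp (adj (parent_graph m p))"
    by (auto simp: symp_def adj_def parent_graph_commute)
  then have "(adj (parent_graph m p))\<^sup>*\<^sup>* u v" for u v
    using from_root sympD[OF symp_rtranclp] by (metis rtranclp_trans)
  moreover have "parent_graph m p i i = 0" for i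
    by (rule parent_graph_diag[OF T])
  moreover have "parent_graph m p i j \<le> 1" for i j
    by (simp add: parent_graph_def)
  ultimately show ?thesis
    unfolding is_tree_def using parent_graph_no_cycle[OF T] by (simp add: parent_graph_commute) blast
qed

text \<open>Going up from \<open>u\<close> and \<open>w\<close> to their first common ancestor gives a path without
  repeated vertices.\<close>
lemma rooted_tree_path_via_ancestor:
  assumes T: "rooted_tree m p d"
    and meet: "(p ^^ i) u = (p ^^ j) w"
    and minimal: "\<forall>i' j'. (p ^^ i') u = (p ^^ j') w \<longrightarrow> i + j \<le> i' + j'"
    and g: "\<And>k. g k = (if k \<le> i then (p ^^ k) u else (p ^^ (i + j - k)) w)"
  shows "inj_on g {..i + j}"
    and "\<And>k. k < i + j \<Longrightarrow>
      (g k \<noteq> m \<and> g (Suc k) = p (g k)) \<or> (g (Suc k) \<noteq> m \<and> g k = p (g (Suc k)))"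
proof -
  have stays_at_root: "(p ^^ l) x = m" if "(p ^^ k) x = m" "k \<le> l" for k l x
  proof -
    have "d x \<le> k"
      using that(1) by (simp add: rooted_tree_funpow_eq_root_iff[OF T])
    then show ?thesis
      using that(2) by (simp add: rooted_tree_funpow_eq_root_iff[OF T])
  qed
  have u_below: "(p ^^ k) u \<noteq> m" if "k < i" for k
    using minimal stays_at_root[of k u i] meet that by fastforce
  have w_below: "(p ^^ k) w \<noteq> m" if "k < j" for k
    using minimal stays_at_root[of k w j] meet that by fastforce
  have g_upper: "g k = (p ^^ (i + j - k)) w" if "i \<le> k" for k
    using that meet unfolding g by auto
  show "k < i + j \<Longrightarrow>
      (g k \<noteq> m \<and> g (Suc k) = p (g k)) \<or> (g (Suc k) \<noteq> m \<and> g k = p (g (Suc k)))" for k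
  proof (cases "k < i")
    case True
    then show ?thesis
      using u_below unfolding g by simp
  next
    case False
    moreover assume "k < i + j"
    ultimately have "i + j - k = Suc (i + j - Suc k)" "i + j - Suc k < j"
      by auto
    then show ?thesis
      using w_below False g_upper[of k] g_upper[of "Suc k"] by simp
  qed
  have "g k \<noteq> g l" if "k < l" "l \<le> i + j" for k l
  proof (cases "l \<le> i")
    case True
    then show ?thesis
      using rooted_tree_funpow_neq[OF T that(1) u_below] that unfolding g by simp
  next
    case l_upper: False
    show ?thesis
    proof (cases "k \<le> i")
      case True
      then show ?thesis
        using minimal that l_upper unfolding g by fastforce
    next
      case False
      then have "i + j - l < i + j - k" "(p ^^ (i + j - l)) w \<noteq> m"
        using that w_below by auto
      then have "(p ^^ (i + j - l)) w \<noteq> (p ^^ (i + j - k)) w"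
        using rooted_tree_funpow_neq[OF T] by blast
      then show ?thesis
        using False l_upper unfolding g by auto
    qed
  qed
  then show "inj_on g {..i + j}"
    by (metis atMost_iff inj_onI linorder_neqE_nat)
qed

lemma rooted_tree_first_common_ancestor:
  assumes T: "rooted_tree m p d"
  obtains i j where "(p ^^ i) u = (p ^^ j) w"
    and "\<forall>i' j'. (p ^^ i') u = (p ^^ j') w \<longrightarrow> i + j \<le> i' + j'"
proof -
  have "(p ^^ d u) u = (p ^^ d w) w"
    using rooted_tree_funpow_eq_root_iff[OF T, of "d u" u] rooted_tree_funpow_eq_root_iff[OF T, of "d w" w]
    by simp
  then obtain ij where "(p ^^ fst ij) u = (p ^^ snd ij) w"
    and "\<forall>ij'. (p ^^ fst ij') u = (p ^^ snd ij') w \<longrightarrow> fst ij + snd ij \<le> fst ij' + snd ij'"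
    using ex_has_least_nat[of "\<lambda>ij. (p ^^ fst ij) u = (p ^^ snd ij) w" "(d u, d w)"
        "\<lambda>ij. fst ij + snd ij"] by auto
  then show ?thesis
    using that[of "fst ij" "snd ij"] by (metis fst_conv snd_conv)
qed

lemma has_cycle_closed_path:
  assumes inj: "inj_on g {..n}" and "2 \<le> n"
    and steps: "\<And>k. k < n \<Longrightarrow> adj E (g k) (g (Suc k))" and closing: "adj E (g n) (g 0)"
  shows "has_cycle E"
proof -
  define vs where "vs = map g [0..<Suc n]"
  have len: "length vs = Suc n"
    by (simp add: vs_def)
  have nth: "vs ! k = g k" if "k < Suc n" for k
    using that by (simp add: vs_def del: upt_Suc)
  have "vs \<noteq> []"
    using len by auto
  then have "hd vs = g 0" "last vs = g n"
    using len nth by (auto simp: hd_conv_nth last_conv_nth)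
  have "set [0..<Suc n] = {..n}"
    by auto
  then have "distinct vs"
    using inj by (simp add: vs_def distinct_map del: upt_Suc)
  then show ?thesis
    unfolding has_cycle_def
    using len nth steps closing \<open>2 \<le> n\<close> \<open>hd vs = g 0\<close> \<open>last vs = g n\<close>
    by (intro exI[of _ vs]) auto
qed

lemma has_cycle_if_non_parent_edge:
  assumes T: "rooted_tree m p d"
    and parent_edges: "\<And>v. v \<noteq> m \<Longrightarrow> adj E (p v) v"
    and sym: "\<And>a b. adj E a b \<Longrightarrow> adj E b a"
    and edge: "adj E u w" "u \<noteq> w" and non_parent: "parent_graph m p u w = 0"
  shows "has_cycle E"
proof -
  obtain i j where meet: "(p ^^ i) u = (p ^^ j) w"
    and minimal: "\<forall>i' j'. (p ^^ i') u = (p ^^ j') w \<longrightarrow> i + j \<le> i' + j'"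
    using rooted_tree_first_common_ancestor[OF T] by blast
  define g where "g k = (if k \<le> i then (p ^^ k) u else (p ^^ (i + j - k)) w)" for k
  note path = rooted_tree_path_via_ancestor[OF T meet minimal g_def]
  have steps: "adj E (g k) (g (Suc k))" if "k < i + j" for k
    using path(2)[OF that]
  proof
    assume up: "g k \<noteq> m \<and> g (Suc k) = p (g k)"
    then have "adj E (p (g k)) (g k)"
      using parent_edges by blast
    then show ?thesis
      using sym up by simp
  next
    assume down: "g (Suc k) \<noteq> m \<and> g k = p (g (Suc k))"
    then show ?thesis
      using parent_edges by simp
  qed
  have "g 0 = u" "g (i + j) = w"
    using meet unfolding g_def by auto
  have "i + j \<noteq> 0"
  proof
    assume "i + j = 0"
    then show False
      using meet edge(2) by simp
  qed
  moreover have "i + j \<noteq> 1"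
  proof
    assume "i + j = 1"
    then have "(u \<noteq> m \<and> w = p u) \<or> (w \<noteq> m \<and> u = p w)"
      using path(2)[of 0] \<open>g 0 = u\<close> \<open>g (i + j) = w\<close> by simp
    then show False
      using non_parent by (simp add: parent_graph_def)
  qed
  ultimately have "i + j \<ge> 2"
    by arith
  then show ?thesis
    using has_cycle_closed_path[OF path(1) _ steps] sym[OF edge(1)] \<open>g 0 = u\<close> \<open>g (i + j) = w\<close>
    by simp
qed

lemma is_tree_eq_parent_graph:
  assumes E: "is_tree E" and T: "rooted_tree m p d"
    and parent_edges: "\<And>v. v \<noteq> m \<Longrightarrow> adj E (p v) v"
  shows "E = parent_graph m p"
proof (intro ext)
  fix u w
  have sym: "adj E a b \<Longrightarrow> adj E b a" for a b
    using E unfolding is_tree_def adj_def by metis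
  have simple: "E u w \<le> 1" "E u u = 0"
    using E unfolding is_tree_def by blast+
  show "E u w = parent_graph m p u w"
  proof (cases "parent_graph m p u w = 0")
    case True
    have "\<not> adj E u w"
    proof
      assume edge: "adj E u w"
      then have "u \<noteq> w"
        using simple by (auto simp: adj_def)
      then have "has_cycle E"
        using has_cycle_if_non_parent_edge[OF T parent_edges sym edge] True by blast
      then show False
        using E by (simp add: is_tree_def)
    qed
    then show ?thesis
      using True by (simp add: adj_def)
  next
    case False
    then have "parent_graph m p u w = 1" "(u \<noteq> m \<and> w = p u) \<or> (w \<noteq> m \<and> u = p w)"
      by (simp_all add: parent_graph_def split: if_splits)
    moreover from this(2) have "adj E u w"
      using parent_edges sym by blast
    ultimately show ?thesis
      using simple by (simp add: adj_def)
  qed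
qed

lemma scaleR_hvec_eq_iff: "a \<noteq> 0 \<Longrightarrow> a *\<^sub>R hvec k = b *\<^sub>R hvec i \<longleftrightarrow> k = i \<and> a = b"
  by (auto simp: vec_eq_iff hvec_nth)

lemma scaleR_hvec_neq_sum:
  assumes "i \<noteq> j" "b \<noteq> 0" "c \<noteq> 0"
  shows "a *\<^sub>R hvec k \<noteq> b *\<^sub>R hvec i + c *\<^sub>R hvec j"
proof
  assume eq: "a *\<^sub>R hvec k = b *\<^sub>R hvec i + c *\<^sub>R hvec j"
  have "(if i = k then a else 0) = b" "(if j = k then a else 0) = c"
    using arg_cong[OF eq, of "\<lambda>x. x $ i"] arg_cong[OF eq, of "\<lambda>x. x $ j"] assms(1)
    by (auto simp: hvec_nth)
  then show False
    using assms by (auto split: if_splits)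
qed

lemma hvec_sum_eq_cases:
  fixes a b c e :: real
  assumes "i \<noteq> j" "k \<noteq> l" "a \<noteq> 0" "b \<noteq> 0" "c \<noteq> 0" "e \<noteq> 0"
    and eq: "a *\<^sub>R hvec i + b *\<^sub>R hvec j = c *\<^sub>R hvec k + e *\<^sub>R hvec l"
  shows "(i = k \<and> j = l \<and> a = c \<and> b = e) \<or> (i = l \<and> j = k \<and> a = e \<and> b = c)"
proof -
  have "a = (if i = k then c else 0) + (if i = l then e else 0)"
    "b = (if j = k then c else 0) + (if j = l then e else 0)"
    "(if k = i then a else 0) + (if k = j then b else 0) = c"
    "(if l = i then a else 0) + (if l = j then b else 0) = e"
    using arg_cong[OF eq, of "\<lambda>x. x $ i"] arg_cong[OF eq, of "\<lambda>x. x $ j"]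
      arg_cong[OF eq, of "\<lambda>x. x $ k"] arg_cong[OF eq, of "\<lambda>x. x $ l"] assms(1,2)
    by (auto simp: hvec_nth split: if_splits)
  then show ?thesis
    using assms(1-6) by (auto split: if_splits)
qed

definition tree_root :: "'n \<Rightarrow> ('n \<Rightarrow> 'n) \<Rightarrow> ('n \<Rightarrow> real) \<Rightarrow> 'n \<Rightarrow> real^'n" where
  "tree_root m p s v = (if v = m then hvec m else hvec (p v) + s v *\<^sub>R hvec v)"

lemma tree_root_in_Bn_roots:
  assumes T: "rooted_tree m p d" and s: "s v \<in> {1, -1}"
  shows "tree_root m p s v \<in> Bn_roots"
proof (cases "v = m")
  case True
  then show ?thesis
    using short_root_in_Bn_roots[of 1 m] by (simp add: tree_root_def)
next
  case False
  then show ?thesis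
    using long_root_in_Bn_roots[of "p v" v 1 "s v"] rooted_tree_parent_neq[OF T] s
    by (simp add: tree_root_def)
qed

lemma span_tree_roots:
  assumes T: "rooted_tree m p d" and s: "\<And>v. s v \<in> {1, -1}"
  shows "span (range (tree_root m p s)) = UNIV"
proof -
  have "hvec v \<in> span (range (tree_root m p s))" for v
    using T
  proof (induction v rule: rooted_tree_induct)
    case root
    then show ?case
      using span_base[of "tree_root m p s m"] by (simp add: tree_root_def)
  next
    case (parent v)
    have "tree_root m p s v \<in> span (range (tree_root m p s))"
      by (simp add: span_base)
    then have "s v *\<^sub>R (tree_root m p s v - hvec (p v)) \<in> span (range (tree_root m p s))"
      using parent(2) by (intro span_scale span_diff)
    moreover have "s v * s v = 1"
      using s[of v] by auto
    then have "s v *\<^sub>R (tree_root m p s v - hvec (p v)) = hvec v"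
      using parent(1) by (simp add: tree_root_def)
    ultimately show ?case
      by simp
  qed
  then have "span Basis \<subseteq> span (range (tree_root m p s))"
    by (intro span_minimal) (auto simp: Basis_vec_def)
  then show ?thesis
    by auto
qed

lemma inj_tree_root:
  assumes T: "rooted_tree m p d" and s: "\<And>v. s v \<in> {1, -1}"
  shows "inj (tree_root m p s)"
proof (rule injI)
  fix v w
  assume eq: "tree_root m p s v = tree_root m p s w"
  have s_nonzero: "s u \<noteq> 0" for u
    using s[of u] by auto
  have root_neq: "hvec m \<noteq> tree_root m p s u" if "u \<noteq> m" for u
    using scaleR_hvec_neq_sum[OF rooted_tree_parent_neq[OF T that], of 1 "s u" 1 m] s_nonzero that
    by (simp add: tree_root_def)
  show "v = w"
  proof (cases "v = m \<or> w = m")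
    case True
    then show ?thesis
      using eq root_neq[of v] root_neq[of w] by (auto simp: tree_root_def split: if_splits)
  next
    case False
    then have "1 *\<^sub>R hvec (p v) + s v *\<^sub>R hvec v = 1 *\<^sub>R hvec (p w) + s w *\<^sub>R hvec w"
      using eq by (simp add: tree_root_def)
    moreover have "p v \<noteq> v" "p w \<noteq> w"
      using False rooted_tree_parent_neq[OF T] by auto
    ultimately have "v = w \<or> (p v = w \<and> v = p w)"
      using hvec_sum_eq_cases[of "p v" v "p w" w 1 "s v" 1 "s w"] s_nonzero by auto
    then show ?thesis
      using rooted_tree_parent_asym[OF T] False by blast
  qed
qed

lemma independent_tree_roots:
  fixes m :: "'n::finite"
  assumes T: "rooted_tree m p d" and s: "\<And>v. s v \<in> {1, -1}"
  shows "independent (range (tree_root m p s))" "card (range (tree_root m p s)) = CARD('n)"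
proof -
  show card: "card (range (tree_root m p s)) = CARD('n)"
    using inj_tree_root[OF T s] by (simp add: card_image)
  then show "independent (range (tree_root m p s))"
    using card_eq_dim[of "range (tree_root m p s)" UNIV] span_tree_roots[OF T s] by simp
qed

lemma pm_closure_range_iff:
  "x \<in> pm_closure (range f) \<longleftrightarrow> (\<exists>v. \<exists>a \<in> {1, -1}. x = a *\<^sub>R f v)"
  by (auto simp: pm_closure_iff) (metis minus_minus scaleR_minus1_left)+

lemma hvec_in_pm_tree_roots_iff:
  assumes T: "rooted_tree m p d" and s: "\<And>v. s v \<in> {1, -1}"
  shows "hvec i \<in> pm_closure (range (tree_root m p s)) \<longleftrightarrow> i = m"
proof
  assume "hvec i \<in> pm_closure (range (tree_root m p s))"
  then obtain v a where a: "a \<in> {1, -1}" and "hvec i = a *\<^sub>R tree_root m p s v"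
    unfolding pm_closure_range_iff by blast
  then have eq: "1 *\<^sub>R hvec i = a *\<^sub>R tree_root m p s v"
    by simp
  show "i = m"
  proof (cases "v = m")
    case True
    then show ?thesis
      using eq a scaleR_hvec_eq_iff[of a m 1 i] by (auto simp: tree_root_def)
  next
    case False
    then have "1 *\<^sub>R hvec i = a *\<^sub>R hvec (p v) + (a * s v) *\<^sub>R hvec v"
      using eq by (simp add: tree_root_def scaleR_add_right)
    moreover have "a \<noteq> 0" "a * s v \<noteq> 0"
      using a s[of v] by auto
    ultimately show ?thesis
      using scaleR_hvec_neq_sum rooted_tree_parent_neq[OF T False] by blast
  qed
next
  assume "i = m"
  then show "hvec i \<in> pm_closure (range (tree_root m p s))"
    unfolding pm_closure_range_iff by (intro exI[of _ m] bexI[of _ 1]) (auto simp: tree_root_def)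
qed

lemma edge_in_pm_tree_roots_iff:
  assumes T: "rooted_tree m p d" and s: "\<And>v. s v \<in> {1, -1}" and "i \<noteq> j" "c \<in> {1, -1}"
  shows "hvec i + c *\<^sub>R hvec j \<in> pm_closure (range (tree_root m p s)) \<longleftrightarrow>
    (j \<noteq> m \<and> i = p j \<and> c = s j) \<or> (i \<noteq> m \<and> j = p i \<and> c = s i)"
proof
  assume "hvec i + c *\<^sub>R hvec j \<in> pm_closure (range (tree_root m p s))"
  then obtain v a where a: "a \<in> {1, -1}" and eq: "hvec i + c *\<^sub>R hvec j = a *\<^sub>R tree_root m p s v"
    unfolding pm_closure_range_iff by blast
  have "a \<noteq> 0" "c \<noteq> 0" "a * a = 1"
    using a assms(4) by auto
  show "(j \<noteq> m \<and> i = p j \<and> c = s j) \<or> (i \<noteq> m \<and> j = p i \<and> c = s i)"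
  proof (cases "v = m")
    case True
    then show ?thesis
      using eq scaleR_hvec_neq_sum[OF \<open>i \<noteq> j\<close>, of 1 c a m] \<open>c \<noteq> 0\<close>
      by (simp add: tree_root_def)
  next
    case False
    have "a * s v \<noteq> 0"
      using \<open>a \<noteq> 0\<close> s[of v] by auto
    have "1 *\<^sub>R hvec i + c *\<^sub>R hvec j = a *\<^sub>R hvec (p v) + (a * s v) *\<^sub>R hvec v"
      using eq False by (simp add: tree_root_def scaleR_add_right)
    then have "(i = p v \<and> j = v \<and> 1 = a \<and> c = a * s v) \<or> (i = v \<and> j = p v \<and> 1 = a * s v \<and> c = a)"
      by (rule hvec_sum_eq_cases[OF \<open>i \<noteq> j\<close> rooted_tree_parent_neq[OF T False] one_neq_zero
            \<open>c \<noteq> 0\<close> \<open>a \<noteq> 0\<close> \<open>a * s v \<noteq> 0\<close>])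
    then show ?thesis
    proof
      assume "i = p v \<and> j = v \<and> 1 = a \<and> c = a * s v"
      then show ?thesis
        using False by auto
    next
      assume flipped: "i = v \<and> j = p v \<and> 1 = a * s v \<and> c = a"
      then have "s v = a"
        using \<open>a * a = 1\<close> by (metis mult.assoc mult.left_neutral mult.right_neutral)
      then show ?thesis
        using flipped False by auto
    qed
  qed
next
  assume "(j \<noteq> m \<and> i = p j \<and> c = s j) \<or> (i \<noteq> m \<and> j = p i \<and> c = s i)"
  then consider "j \<noteq> m" "hvec i + c *\<^sub>R hvec j = 1 *\<^sub>R tree_root m p s j"
    | "i \<noteq> m" "hvec i + c *\<^sub>R hvec j = c *\<^sub>R tree_root m p s i"
    using assms(4) by (auto simp: tree_root_def algebra_simps)
  then show "hvec i + c *\<^sub>R hvec j \<in> pm_closure (range (tree_root m p s))"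
    unfolding pm_closure_range_iff using assms(4) by cases blast+
qed

lemma Bn_marked_tree_roots:
  assumes "rooted_tree m p d" "\<And>v. s v \<in> {1, -1}"
  shows "Bn_marked (range (tree_root m p s)) = {m}"
  using hvec_in_pm_tree_roots_iff[OF assms] by (auto simp: Bn_marked_iff)

lemma Bn_edges_tree_roots:
  assumes T: "rooted_tree m p d" and s: "\<And>v. s v \<in> {1, -1}"
  shows "Bn_edges (range (tree_root m p s)) = parent_graph m p"
proof (intro ext)
  fix i j
  show "Bn_edges (range (tree_root m p s)) i j = parent_graph m p i j"
  proof (cases "i = j")
    case True
    then show ?thesis
      by (simp add: Bn_edges_diag parent_graph_diag[OF T])
  next
    case False
    let ?S = "{c \<in> {1, -1}. hvec i + c *\<^sub>R hvec j \<in> pm_closure (range (tree_root m p s))}"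
    have S: "?S = {c \<in> {1, -1}. (j \<noteq> m \<and> i = p j \<and> c = s j) \<or> (i \<noteq> m \<and> j = p i \<and> c = s i)}"
      by (rule Collect_cong, rule conj_cong, rule refl, erule edge_in_pm_tree_roots_iff[OF T s False])
    have "card ?S = parent_graph m p i j"
    proof (cases "j \<noteq> m \<and> i = p j")
      case True
      then have "\<not> (i \<noteq> m \<and> j = p i)"
        using rooted_tree_parent_asym[OF T] by blast
      then have "?S = {s j}"
        unfolding S using True s[of j] by auto
      then show ?thesis
        using True by (simp add: parent_graph_def)
    next
      case not_child: False
      show ?thesis
      proof (cases "i \<noteq> m \<and> j = p i")
        case True
        then have "?S = {s i}"
          unfolding S using not_child s[of i] by auto
        then show ?thesis
          using True by (simp add: parent_graph_def)
      next
        case False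
        then have "?S = {}"
          unfolding S using not_child by auto
        moreover have "parent_graph m p i j = 0"
          using False not_child by (simp add: parent_graph_def)
        ultimately show ?thesis
          by (simp only: card.empty)
      qed
    qed
    then show ?thesis
      using False by (simp add: Bn_edges_eq_card)
  qed
qed

lemma Bn_edge_signs:
  assumes "\<And>v. P v \<Longrightarrow> a v \<noteq> b v \<and> Bn_edges G (a v) (b v) > 0"
  obtains \<tau> where "\<And>v. \<tau> v \<in> {1, -1}" "\<And>v. P v \<Longrightarrow> hvec (a v) + \<tau> v *\<^sub>R hvec (b v) \<in> pm_closure G"
proof -
  have "\<forall>v. \<exists>t. t \<in> {1, -1} \<and> (P v \<longrightarrow> hvec (a v) + t *\<^sub>R hvec (b v) \<in> pm_closure G)"
    using assms Bn_edges_pos_iff by (metis insertI1)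
  then show ?thesis
    using that by metis
qed

section \<open>Every realization is the tree of roots of a marked tree\<close>

text \<open>The tree roots found in \<open>\<plusminus>G\<close> are independent, so they are already all of it by counting.\<close>
lemma realized_roots_tree_form:
  fixes F :: "(real^'n) set"
  assumes F: "generates_Bn F" and G: "realizes F G"
  obtains m p d s where "rooted_tree m p d" "\<And>v. s v \<in> {1, -1}"
    "pm_closure G = pm_closure (range (tree_root m p s))"
proof -
  have roots: "G \<subseteq> Bn_roots" and W: "refl_group G = Weyl_Bn"
    using G refl_group_realizing_roots[OF F G] by (auto simp: realizes_iff)
  obtain m where m: "hvec m \<in> pm_closure G"
    using Bn_marked_nonempty[OF roots W] Bn_marked_iff by blast
  obtain p d where T: "rooted_tree m p d" and parent: "\<And>v. v \<noteq> m \<Longrightarrow> adj (Bn_edges G) (p v) v"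
    using exists_rooted_tree[of "adj (Bn_edges G)" m] Bn_graph_connected[OF roots W] by blast
  have "p v \<noteq> v \<and> Bn_edges G (p v) v > 0" if "v \<noteq> m" for v
    using parent[OF that] rooted_tree_parent_neq[OF T that] by (simp add: adj_def)
  then obtain s where s: "\<And>v. s v \<in> {1, -1}"
    and s_edge: "\<And>v. v \<noteq> m \<Longrightarrow> hvec (p v) + s v *\<^sub>R hvec v \<in> pm_closure G"
    using Bn_edge_signs[of "\<lambda>v. v \<noteq> m" p "\<lambda>v. v" G] by metis
  have "range (tree_root m p s) \<subseteq> pm_closure G"
    using m s_edge by (auto simp: tree_root_def)
  then have sub: "pm_closure (range (tree_root m p s)) \<subseteq> pm_closure G"
    by (rule pm_closure_subset)
  have simplex: "simplex_family F"
    using F by (simp add: generates_Bn_def)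
  have "card (pm_closure (range (tree_root m p s))) = card (pm_closure G)"
    using card_pm_closure_independent[OF independent_tree_roots(1)[of m p d s, OF T s]]
      independent_tree_roots(2)[of m p d s, OF T s] card_pm_closure_realized[OF simplex G]
    by simp
  moreover have "card (pm_closure G) > 0"
    using card_pm_closure_realized[OF simplex G] by simp
  then have "finite (pm_closure G)"
    by (simp add: card_gt_0_iff)
  ultimately have "pm_closure G = pm_closure (range (tree_root m p s))"
    using card_subset_eq[OF _ sub] by simp
  then show ?thesis
    using that T s by blast
qed

lemma marked_graph_of_tree_form:
  assumes T: "rooted_tree m p d" and s: "\<And>v. s v \<in> {1, -1}"
    and closure: "pm_closure G = pm_closure (range (tree_root m p s))"
  shows "Bn_edges G = parent_graph m p" "Bn_marked G = {m}"
  using closure Bn_edges_pm_closure Bn_marked_pm_closure Bn_edges_tree_roots[of m p d s, OF T s]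
    Bn_marked_tree_roots[of m p d s, OF T s] by metis+

lemma realized_marked_tree_one:
  fixes F :: "(real^'n) set"
  assumes F: "generates_Bn F" and G: "realizes F G"
  shows "marked_tree_one (Bn_edges G) (Bn_marked G)"
proof -
  obtain m p d s where T: "rooted_tree m p d" and s: "\<And>v. s v \<in> {1, -1}"
    and closure: "pm_closure G = pm_closure (range (tree_root m p s))"
    using realized_roots_tree_form[OF F G] by blast
  then show ?thesis
    using marked_graph_of_tree_form[of m p d s G, OF T s closure] is_tree_parent_graph[OF T]
    by (simp add: marked_tree_one_def)
qed

section \<open>Isometric families have isomorphic marked trees\<close>

lemma orthogonal_transformation_sgn:
  "orthogonal_transformation Q \<Longrightarrow> Q (sgn x) = sgn (Q x)"
  by (simp add: sgn_div_norm orthogonal_transformation_scaleR orthogonal_transformation_norm)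

lemma Weyl_Bn_conjugation_invariant_inv:
  fixes Q :: "real^'n \<Rightarrow> real^'n"
  assumes Q: "orthogonal_transformation Q" and W: "(\<lambda>g. Q \<circ> g \<circ> inv Q) ` Weyl_Bn = Weyl_Bn"
  shows "(\<lambda>g. inv Q \<circ> g \<circ> inv (inv Q)) ` Weyl_Bn = Weyl_Bn"
proof -
  have cancel: "inv Q \<circ> (Q \<circ> g \<circ> inv Q) \<circ> Q = g" for g :: "real^'n \<Rightarrow> real^'n"
    by (simp add: fun_eq_iff orthogonal_transformation_inv_f_f[OF Q])
  have "(\<lambda>g. inv Q \<circ> g \<circ> Q) ` (\<lambda>g. Q \<circ> g \<circ> inv Q) ` Weyl_Bn = Weyl_Bn"
    by (simp add: image_image cancel)
  then show ?thesis
    using W inv_inv_eq[OF orthogonal_transformation_bij[OF Q]] by simp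
qed

lemma sgn_image_Bn_root:
  fixes Q :: "real^'n \<Rightarrow> real^'n"
  assumes Q: "orthogonal_transformation Q" and W: "(\<lambda>g. Q \<circ> g \<circ> inv Q) ` Weyl_Bn = Weyl_Bn"
    and r: "r \<in> Bn_roots"
  shows "\<exists>r' \<in> Bn_roots. sgn (Q r) = sgn r'"
proof -
  have "Q \<circ> reflection r \<circ> inv Q \<in> Weyl_Bn"
    using W reflection_in_refl_group[OF r] by blast
  then have "signed_basis_map (reflection (sgn (Q r)))"
    using signed_basis_map_Weyl_Bn reflection_conjugate[OF Q] by (simp add: reflection_sgn)
  moreover have "Q r \<noteq> 0"
    using Bn_root_nonzero[OF r] orthogonal_transformation_norm[OF Q, of r] by auto
  then have "norm (sgn (Q r)) = 1"
    by (simp add: norm_sgn)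
  ultimately show ?thesis
    using unit_vector_sgn_Bn_root by blast
qed

lemma sq_nth_along_Bn_root:
  assumes x: "x \<in> Bn_roots" and y: "sgn y = sgn x" "y \<bullet> y = 2"
  shows "(y $ i)\<^sup>2 \<in> {0, 1, 2}"
proof -
  have "y \<noteq> 0"
    using y(2) by auto
  then have "y = norm y *\<^sub>R sgn y"
    by (simp add: sgn_div_norm)
  then have "y = norm y *\<^sub>R sgn x"
    unfolding y(1) .
  also have "\<dots> = (norm y / norm x) *\<^sub>R x"
    by (simp add: sgn_div_norm divide_inverse)
  finally have "y $ i = ((norm y / norm x) *\<^sub>R x) $ i"
    by (rule arg_cong)
  then have "y $ i = (norm y / norm x) * x $ i"
    by simp
  then have "(y $ i)\<^sup>2 = 2 / (x \<bullet> x) * (x $ i)\<^sup>2"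
    using y(2) by (simp add: power_mult_distrib power_divide power2_norm_eq_inner)
  moreover have "(x $ i)\<^sup>2 = 0 \<or> (x $ i)\<^sup>2 = 1"
    using Bn_root_nth[OF x, of i] by auto
  ultimately show ?thesis
    using Bn_root_inner_self[OF x] by auto
qed

text \<open>For \<open>n \<ge> 3\<close> an isometry normalizing the Weyl group cannot send \<open>hvec i\<close> to a
  normalized long root \<open>r'/\<surd>2\<close>: choosing a long root \<open>w\<close> with \<open>r' \<bullet> w = 1\<close> (which needs a third
  coordinate), the \<open>i\<close>-th coordinate of \<open>Q\<^sup>-\<^sup>1 w\<close> would be \<open>1/\<surd>2\<close>, while \<open>Q\<^sup>-\<^sup>1 w\<close> is a
  vector of length \<open>\<surd>2\<close> along a root, whose coordinates have squares in \<open>{0, 1, 2}\<close>.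
  For \<open>n = 2\<close> the rotation by \<open>\<pi>/4\<close> is a counterexample.\<close>
lemma Weyl_Bn_normalizer_signed_basis:
  fixes Q :: "real^'n \<Rightarrow> real^'n"
  assumes n: "CARD('n) \<ge> 3" and Q: "orthogonal_transformation Q"
    and W: "(\<lambda>g. Q \<circ> g \<circ> inv Q) ` Weyl_Bn = Weyl_Bn"
  shows "\<exists>k. \<exists>a \<in> {1, -1}. Q (hvec i) = a *\<^sub>R hvec k"
proof -
  obtain r' where r': "r' \<in> Bn_roots" "sgn (Q (hvec i)) = sgn r'"
    using sgn_image_Bn_root[OF Q W short_root_in_Bn_roots[of 1 i]] by auto
  have Qi: "Q (hvec i) = sgn r'"
    using r'(2) orthogonal_transformation_norm[OF Q, of "hvec i"] by (simp add: sgn_div_norm)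
  from r'(1) show ?thesis
  proof (cases rule: Bn_roots_cases)
    case (short k a)
    then show ?thesis
      using Qi by (auto simp: sgn_div_norm)
  next
    case (long k l a b)
    obtain t where t: "t \<noteq> k" "t \<noteq> l"
    proof -
      have "card {k, l} \<le> 2"
        by (simp add: card_insert_if)
      moreover have "UNIV \<subseteq> {k, l} \<Longrightarrow> CARD('n) \<le> card {k, l}"
        by (simp add: card_mono)
      ultimately have "\<not> UNIV \<subseteq> {k, l}"
        using n by linarith
      then show ?thesis
        using that by blast
    qed
    define w where "w = a *\<^sub>R hvec k + 1 *\<^sub>R hvec t"
    have "w \<in> Bn_roots"
      unfolding w_def using long_root_in_Bn_roots[of k t a 1] t long(2) by auto
    have sq: "a * a = 1" "b * b = 1"
      using long by auto
    have "r' \<bullet> w = 1" "r' \<bullet> r' = 2" "w \<bullet> w = 2"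
      unfolding w_def using long t sq by (simp_all add: inner_add_left inner_add_right inner_axis_axis)
    define y where "y = inv Q w"
    have Qi': "orthogonal_transformation (inv Q)"
      using orthogonal_transformation_inv[OF Q] .
    obtain x where x: "x \<in> Bn_roots" "sgn y = sgn x"
      using sgn_image_Bn_root[OF Qi' Weyl_Bn_conjugation_invariant_inv[OF Q W] \<open>w \<in> Bn_roots\<close>]
      unfolding y_def by blast
    have "y \<bullet> y = 2"
      using Qi' \<open>w \<bullet> w = 2\<close> by (simp add: y_def orthogonal_transformation_def)
    have "y $ i = Q (hvec i) \<bullet> Q y"
      using Q by (simp add: orthogonal_transformation_def inner_axis')
    also have "\<dots> = r' \<bullet> w / norm r'"
      using Qi orthogonal_transformation_f_inv_f[OF Q]
      by (simp add: y_def sgn_div_norm divide_inverse_commute)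
    finally have "(y $ i)\<^sup>2 = 1 / 2"
      using \<open>r' \<bullet> w = 1\<close> \<open>r' \<bullet> r' = 2\<close> by (simp add: power_divide power2_norm_eq_inner)
    then show ?thesis
      using sq_nth_along_Bn_root[OF x \<open>y \<bullet> y = 2\<close>, of i] by simp
  qed
qed

lemma signed_permutation_decompose:
  fixes L :: "real^'n \<Rightarrow> real^'n"
  assumes lin: "linear L" and inj: "inj L" and images: "\<And>i. \<exists>k. \<exists>a \<in> {1, -1}. L (hvec i) = a *\<^sub>R hvec k"
  obtains \<sigma> \<epsilon> where "bij \<sigma>" "\<And>i. \<epsilon> i \<in> {1, -1}" "\<And>i. L (hvec i) = \<epsilon> i *\<^sub>R hvec (\<sigma> i)"
proof -
  obtain \<sigma> \<epsilon> where se: "\<And>i. \<epsilon> i \<in> {1, -1}" "\<And>i. L (hvec i) = \<epsilon> i *\<^sub>R hvec (\<sigma> i)"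
    using images by metis
  have "inj \<sigma>"
  proof (rule injI)
    fix i j
    assume "\<sigma> i = \<sigma> j"
    moreover have "\<epsilon> i * \<epsilon> i = 1" "\<epsilon> j * \<epsilon> j = 1"
      using se(1)[of i] se(1)[of j] by auto
    ultimately have "L (hvec i) = L ((\<epsilon> i * \<epsilon> j) *\<^sub>R hvec j)"
      using se(2)[of i] se(2)[of j] linear_scale[OF lin] by (simp add: algebra_simps)
    then have "1 *\<^sub>R hvec i = (\<epsilon> i * \<epsilon> j) *\<^sub>R hvec j"
      using inj by (simp add: inj_eq)
    then show "i = j"
      using scaleR_hvec_eq_iff[of 1 i "\<epsilon> i * \<epsilon> j" j] by simp
  qed
  then have "bij \<sigma>"
    using finite_UNIV_inj_surj[OF finite] by (simp add: bij_def)
  then show ?thesis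
    using that se by blast
qed

lemma signed_permutation_Bn_roots:
  fixes L :: "real^'n \<Rightarrow> real^'n"
  assumes lin: "linear L" and \<sigma>: "inj \<sigma>"
    and \<epsilon>: "\<And>i. \<epsilon> i \<in> {1, -1}" and L: "\<And>i. L (hvec i) = \<epsilon> i *\<^sub>R hvec (\<sigma> i)"
    and r: "r \<in> Bn_roots"
  shows "L r \<in> Bn_roots"
  using r
proof (cases rule: Bn_roots_cases)
  case (short i a)
  then have "L r = (a * \<epsilon> i) *\<^sub>R hvec (\<sigma> i)" "a * \<epsilon> i \<in> {1, -1}"
    using L linear_scale[OF lin] \<epsilon>[of i] by auto
  then show ?thesis
    using short_root_in_Bn_roots by simp
next
  case (long i j a b)
  then have "L r = (a * \<epsilon> i) *\<^sub>R hvec (\<sigma> i) + (b * \<epsilon> j) *\<^sub>R hvec (\<sigma> j)"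
    "a * \<epsilon> i \<in> {1, -1}" "b * \<epsilon> j \<in> {1, -1}" "\<sigma> i \<noteq> \<sigma> j"
    using L linear_scale[OF lin] linear_add[OF lin] \<epsilon>[of i] \<epsilon>[of j] \<sigma> by (auto simp: inj_eq)
  then show ?thesis
    using long_root_in_Bn_roots by simp
qed

lemma image_pm_closure_realized_subset:
  fixes Q :: "real^'n \<Rightarrow> real^'n"
  assumes Q: "orthogonal_transformation Q" and roots: "\<And>r. r \<in> Bn_roots \<Longrightarrow> Q r \<in> Bn_roots"
    and F: "simplex_family F" and G: "realizes F G" and G': "realizes (Q ` F) G'"
  shows "Q ` pm_closure G \<subseteq> pm_closure G'"
proof
  fix y
  assume "y \<in> Q ` pm_closure G"
  then obtain r where r: "r \<in> pm_closure G" "y = Q r"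
    by blast
  have "r \<in> Bn_roots"
    using r(1) G pm_closure_subset_Bn_roots by (auto simp: realizes_iff)
  have "Q (sgn r) \<in> Q ` F"
    using sgn_image_pm_closure_realized[OF F G] r(1) by blast
  then obtain g where g: "g \<in> G'" "sgn (Q r) = sgn g"
    using G' orthogonal_transformation_sgn[OF Q] by (auto simp: realizes_iff)
  then have "Q r = g"
    using inj_on_sgn_Bn_roots roots[OF \<open>r \<in> Bn_roots\<close>] G' by (auto simp: realizes_iff inj_on_def)
  then show "y \<in> pm_closure G'"
    using r(2) g(1) by (simp add: pm_closure_def)
qed

lemma image_pm_closure_realized_eq:
  fixes Q :: "real^'n \<Rightarrow> real^'n"
  assumes Q: "orthogonal_transformation Q"
    and F: "simplex_family F" "realizes F G" and F': "simplex_family F'" "realizes F' G'"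
    and sub: "Q ` pm_closure G \<subseteq> pm_closure G'"
  shows "Q ` pm_closure G = pm_closure G'"
proof -
  have "card (Q ` pm_closure G) = card (pm_closure G')"
    using card_pm_closure_realized[OF F] card_pm_closure_realized[OF F']
      orthogonal_transformation_inj[OF Q] by (simp add: card_image inj_on_subset)
  moreover have "card (pm_closure G') > 0"
    using card_pm_closure_realized[OF F'] by simp
  then have "finite (pm_closure G')"
    by (simp add: card_gt_0_iff)
  ultimately show ?thesis
    using card_subset_eq[OF _ sub] by simp
qed

lemma card_sign_flip:
  assumes "e \<in> {1, -1 :: real}"
  shows "card {t \<in> {1, -1}. P (t * e)} = card {u \<in> {1, -1}. P u}"
proof -
  have "e * e = 1"
    using assms by auto
  then have "{t \<in> {1, -1}. P (t * e)} = (\<lambda>u. u * e) ` {u \<in> {1, -1}. P u}"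
    using assms by (auto simp: image_iff mult.assoc)
  moreover have "inj_on (\<lambda>u. u * e) {u \<in> {1, -1}. P u}"
    using \<open>e * e = 1\<close> by (intro inj_onI) (metis mult_cancel_right zero_neq_one mult_zero_left)
  ultimately show ?thesis
    by (simp add: card_image)
qed

lemma Bn_marked_signed_permutation:
  fixes Q :: "real^'n \<Rightarrow> real^'n"
  assumes lin: "linear Q" and \<epsilon>: "\<And>i. \<epsilon> i \<in> {1, -1}" and Q: "\<And>i. Q (hvec i) = \<epsilon> i *\<^sub>R hvec (\<sigma> i)"
    and image_iff: "\<And>x. Q x \<in> pm_closure G' \<longleftrightarrow> x \<in> pm_closure G"
  shows "\<sigma> i \<in> Bn_marked G' \<longleftrightarrow> i \<in> Bn_marked G"
proof -
  have "\<epsilon> i * \<epsilon> i = 1"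
    using \<epsilon>[of i] by auto
  then have "hvec (\<sigma> i) = Q (\<epsilon> i *\<^sub>R hvec i)"
    using Q[of i] linear_scale[OF lin] by simp
  then show ?thesis
    using image_iff sign_scaleR_in_pm_closure_iff[OF \<epsilon>] by (simp add: Bn_marked_iff)
qed

lemma Bn_edges_signed_permutation:
  fixes Q :: "real^'n \<Rightarrow> real^'n"
  assumes lin: "linear Q" and \<sigma>: "inj \<sigma>"
    and \<epsilon>: "\<And>i. \<epsilon> i \<in> {1, -1}" and Q: "\<And>i. Q (hvec i) = \<epsilon> i *\<^sub>R hvec (\<sigma> i)"
    and image_iff: "\<And>x. Q x \<in> pm_closure G' \<longleftrightarrow> x \<in> pm_closure G"
  shows "Bn_edges G' (\<sigma> i) (\<sigma> j) = Bn_edges G i j"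
proof (cases "i = j")
  case True
  then show ?thesis by (simp add: Bn_edges_diag)
next
  case False
  have sq: "\<epsilon> i * \<epsilon> i = 1" "\<epsilon> j * \<epsilon> j = 1"
    using \<epsilon>[of i] \<epsilon>[of j] by auto
  have edge: "hvec (\<sigma> i) + t *\<^sub>R hvec (\<sigma> j) \<in> pm_closure G' \<longleftrightarrow>
      hvec i + (t * (\<epsilon> i * \<epsilon> j)) *\<^sub>R hvec j \<in> pm_closure G" for t
  proof -
    have "hvec (\<sigma> i) + t *\<^sub>R hvec (\<sigma> j) = Q (\<epsilon> i *\<^sub>R (hvec i + (t * (\<epsilon> i * \<epsilon> j)) *\<^sub>R hvec j))"
      using Q sq linear_scale[OF lin] linear_add[OF lin] by (simp add: scaleR_add_right algebra_simps)
    then show ?thesis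
      using image_iff sign_scaleR_in_pm_closure_iff[OF \<epsilon>] by simp
  qed
  have "\<sigma> i \<noteq> \<sigma> j"
    using False \<sigma> by (simp add: inj_eq)
  then have "Bn_edges G' (\<sigma> i) (\<sigma> j) =
      card {t \<in> {1, -1}. hvec i + (t * (\<epsilon> i * \<epsilon> j)) *\<^sub>R hvec j \<in> pm_closure G}"
    by (simp add: Bn_edges_eq_card edge)
  also have "\<dots> = card {u \<in> {1, -1}. hvec i + u *\<^sub>R hvec j \<in> pm_closure G}"
    using \<epsilon>[of i] \<epsilon>[of j]
    by (intro card_sign_flip[where P = "\<lambda>u. hvec i + u *\<^sub>R hvec j \<in> pm_closure G"]) auto
  also have "\<dots> = Bn_edges G i j"
    using False by (simp add: Bn_edges_eq_card)
  finally show ?thesis .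
qed

lemma marked_iso_signed_permutation:
  fixes Q :: "real^'n \<Rightarrow> real^'n"
  assumes lin: "linear Q" and "inj Q" and \<sigma>: "bij \<sigma>"
    and \<epsilon>: "\<And>i. \<epsilon> i \<in> {1, -1}" and Q: "\<And>i. Q (hvec i) = \<epsilon> i *\<^sub>R hvec (\<sigma> i)"
    and image: "Q ` pm_closure G = pm_closure G'"
  shows "marked_iso (Bn_edges G) (Bn_marked G) (Bn_edges G') (Bn_marked G')"
proof -
  have image_iff: "Q x \<in> pm_closure G' \<longleftrightarrow> x \<in> pm_closure G" for x
    unfolding image[symmetric] using \<open>inj Q\<close> by (rule inj_image_mem_iff)
  note mark = Bn_marked_signed_permutation[where Q = Q and \<epsilon> = \<epsilon> and \<sigma> = \<sigma> and G = G and G' = G',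
      OF lin \<epsilon> Q image_iff]
  have "\<sigma> ` Bn_marked G = Bn_marked G'"
  proof (intro set_eqI iffI)
    fix k
    assume "k \<in> \<sigma> ` Bn_marked G"
    then show "k \<in> Bn_marked G'"
      using mark by auto
  next
    fix k
    assume k: "k \<in> Bn_marked G'"
    obtain i where "k = \<sigma> i"
      using \<sigma> by (metis bij_pointE)
    then show "k \<in> \<sigma> ` Bn_marked G"
      using k mark by auto
  qed
  moreover note Bn_edges_signed_permutation[where Q = Q and \<epsilon> = \<epsilon> and \<sigma> = \<sigma> and G = G and G' = G',
      OF lin bij_is_inj[OF \<sigma>] \<epsilon> Q image_iff]
  ultimately show ?thesis
    unfolding marked_iso_def using \<sigma> by blast
qed

lemma is_tree_two_vertices:
  fixes E :: "'n::finite \<Rightarrow> 'n \<Rightarrow> nat"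
  assumes n: "CARD('n) = 2" and E: "is_tree E"
  shows "E i j = (if i = j then 0 else 1)"
proof (cases "i = j")
  case True
  then show ?thesis using E unfolding is_tree_def by simp
next
  case False
  have UNIV: "UNIV = {i, j}"
    using False n by (intro card_subset_eq[symmetric]) auto
  have "E i j \<noteq> 0"
  proof
    assume "E i j = 0"
    moreover have "E i i = 0" "E j j = 0" "E j i = E i j"
      using E unfolding is_tree_def by metis+
    moreover have "a \<in> {i, j}" "b \<in> {i, j}" for a b
      using UNIV by auto
    ultimately have no_edge: "\<not> adj E a b" for a b
      unfolding adj_def by (metis empty_iff insert_iff less_irrefl)
    have "(adj E)\<^sup>*\<^sup>* i j"
      using E unfolding is_tree_def by blast
    then have "i = j"
      using no_edge by (induction rule: rtranclp_induct) auto
    then show False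
      using False by simp
  qed
  moreover have "E i j \<le> 1"
    using E unfolding is_tree_def by blast
  ultimately show ?thesis
    using False by simp
qed

lemma marked_iso_two_vertices:
  fixes E E' :: "'n::finite \<Rightarrow> 'n \<Rightarrow> nat"
  assumes n: "CARD('n) = 2" and E: "marked_tree_one E M" and E': "marked_tree_one E' M'"
  shows "marked_iso E M E' M'"
proof -
  obtain x y where M: "M = {x}" "M' = {y}"
    using E E' unfolding marked_tree_one_def by (auto simp: card_1_singleton_iff)
  define \<pi> where "\<pi> = Transposition.transpose x y"
  have "bij \<pi>"
    by (simp add: \<pi>_def)
  have "is_tree E" "is_tree E'"
    using E E' by (simp_all add: marked_tree_one_def)
  then have "E' (\<pi> i) (\<pi> j) = E i j" for i j
    using is_tree_two_vertices[OF n \<open>is_tree E\<close>] is_tree_two_vertices[OF n \<open>is_tree E'\<close>] \<open>bij \<pi>\<close>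
    by (simp add: bij_def inj_eq)
  moreover have "\<pi> ` M = M'"
    using M by (simp add: \<pi>_def)
  ultimately show ?thesis
    unfolding marked_iso_def using \<open>bij \<pi>\<close> by blast
qed

lemma isometric_realizations_marked_iso:
  fixes F :: "(real^'n) set"
  assumes n: "CARD('n) \<ge> 2" and F: "generates_Bn F" and iso: "isometric_families F F'"
    and G: "realizes F G" and G': "realizes F' G'"
  shows "marked_iso (Bn_edges G) (Bn_marked G) (Bn_edges G') (Bn_marked G')"
proof -
  obtain Q where Q: "orthogonal_transformation Q" and F': "F' = Q ` F"
    using iso unfolding isometric_families_def by blast
  have F'_gen: "generates_Bn F'"
    using generates_Bn_image[OF F Q] F' by simp
  consider "CARD('n) = 2" | "CARD('n) \<ge> 3"
    using n by linarith
  then show ?thesis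
  proof cases
    case 1
    then show ?thesis
      using marked_iso_two_vertices realized_marked_tree_one[OF F G] realized_marked_tree_one[OF F'_gen G']
      by blast
  next
    case 2
    have W: "(\<lambda>g. Q \<circ> g \<circ> inv Q) ` Weyl_Bn = Weyl_Bn"
      using Weyl_Bn_conjugation_invariant[OF F G Q] G' F' by simp
    have lin: "linear Q" and "inj Q"
      using Q orthogonal_transformation_linear orthogonal_transformation_inj by blast+
    obtain \<sigma> \<epsilon> where \<sigma>: "bij \<sigma>" and \<epsilon>: "\<And>i. \<epsilon> i \<in> {1, -1}"
      and Q_hvec: "\<And>i. Q (hvec i) = \<epsilon> i *\<^sub>R hvec (\<sigma> i)"
      using signed_permutation_decompose[OF lin \<open>inj Q\<close> Weyl_Bn_normalizer_signed_basis[OF 2 Q W]]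
      by blast
    have simplex: "simplex_family F" "simplex_family F'"
      using F F'_gen by (simp_all add: generates_Bn_def)
    have "Q ` pm_closure G \<subseteq> pm_closure G'"
      using image_pm_closure_realized_subset[OF Q _ simplex(1) G] G' F'
        signed_permutation_Bn_roots[OF lin bij_is_inj[OF \<sigma>] \<epsilon> Q_hvec] by blast
    then have "Q ` pm_closure G = pm_closure G'"
      using image_pm_closure_realized_eq[OF Q simplex(1) G simplex(2) G'] by blast
    then show ?thesis
      using marked_iso_signed_permutation[OF lin \<open>inj Q\<close> \<sigma> \<epsilon> Q_hvec] by blast
  qed
qed

section \<open>Families with isomorphic marked trees are isometric\<close>

lemma signed_permutation_orthogonal:
  fixes \<sigma> :: "'n::finite \<Rightarrow> 'n"
  assumes \<sigma>: "bij \<sigma>" and \<epsilon>: "\<And>i. \<epsilon> i \<in> {1, -1}"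
  obtains Q :: "real^'n \<Rightarrow> real^'n"
  where "orthogonal_transformation Q" "\<And>i. Q (hvec i) = \<epsilon> i *\<^sub>R hvec (\<sigma> i)"
proof
  define Q where "Q x = (\<chi> j. \<epsilon> (inv \<sigma> j) * x $ inv \<sigma> j)" for x :: "real^'n"
  have Q_nth: "Q x $ \<sigma> i = \<epsilon> i * x $ i" for x i
    using \<sigma> by (simp add: Q_def inv_f_f bij_is_inj)
  have all_\<sigma>: "(\<forall>j. P j) \<longleftrightarrow> (\<forall>i. P (\<sigma> i))" for P
    using \<sigma> by (metis bij_pointE)
  show "Q (hvec i) = \<epsilon> i *\<^sub>R hvec (\<sigma> i)" for i
    unfolding vec_eq_iff all_\<sigma>[of "\<lambda>j. Q (hvec i) $ j = (\<epsilon> i *\<^sub>R hvec (\<sigma> i)) $ j"]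
    using \<sigma> by (auto simp: Q_nth hvec_nth bij_def inj_eq)
  have "linear Q"
    by (rule linearI) (simp_all add: vec_eq_iff all_\<sigma> Q_nth algebra_simps)
  moreover have "Q v \<bullet> Q w = v \<bullet> w" for v w
  proof -
    have sq: "\<epsilon> i * \<epsilon> i = 1" for i
      using \<epsilon>[of i] by auto
    have "Q v \<bullet> Q w = (\<Sum>i\<in>UNIV. Q v $ \<sigma> i * Q w $ \<sigma> i)"
      unfolding inner_vec_def using sum.reindex[OF bij_is_inj[OF \<sigma>]] \<sigma> by (simp add: bij_def)
    also have "\<dots> = (\<Sum>i\<in>UNIV. (\<epsilon> i * \<epsilon> i) * (v $ i * w $ i))"
      by (simp add: Q_nth mult_ac)
    also have "\<dots> = (\<Sum>i\<in>UNIV. v $ i * w $ i)"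
      using \<epsilon> by (simp add: sq)
    finally show ?thesis
      by (simp add: inner_vec_def)
  qed
  ultimately show "orthogonal_transformation Q"
    by (simp add: orthogonal_transformation_def)
qed

lemma rooted_tree_sign_propagation:
  assumes T: "rooted_tree m p d" and c: "\<And>v. c v \<in> {1, -1 :: real}"
  obtains \<epsilon> where "\<epsilon> m = 1" "\<And>v. \<epsilon> v \<in> {1, -1}" "\<And>v. v \<noteq> m \<Longrightarrow> \<epsilon> v = c v * \<epsilon> (p v)"
proof
  define \<epsilon> where "\<epsilon> v = (\<Prod>k<d v. c ((p ^^ k) v))" for v
  show "\<epsilon> m = 1"
    using rooted_tree_root[OF T] by (simp add: \<epsilon>_def)
  show step: "\<epsilon> v = c v * \<epsilon> (p v)" if "v \<noteq> m" for v
    unfolding \<epsilon>_def by (rule rooted_tree_prod_path[OF T that])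
  show "\<epsilon> v \<in> {1, -1}" for v
    using T
  proof (induction v rule: rooted_tree_induct)
    case root
    then show ?case using \<open>\<epsilon> m = 1\<close> by simp
  next
    case (parent v)
    then show ?case using step[OF parent(1)] c[of v] by auto
  qed
qed

lemma image_pm_closure_linear: "linear Q \<Longrightarrow> Q ` pm_closure A = pm_closure (Q ` A)"
  by (simp add: pm_closure_def image_Un image_image linear_neg)

lemma isometric_if_image_pm_closure:
  fixes Q :: "real^'n \<Rightarrow> real^'n"
  assumes Q: "orthogonal_transformation Q"
    and F: "simplex_family F" "realizes F G" and F': "simplex_family F'" "realizes F' G'"
    and sub: "Q ` pm_closure G \<subseteq> pm_closure G'"
  shows "isometric_families F F'"
proof -
  have "Q ` F = Q ` sgn ` pm_closure G"
    using sgn_image_pm_closure_realized[OF F] by simp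
  also have "\<dots> = sgn ` Q ` pm_closure G"
    using orthogonal_transformation_sgn[OF Q] by (simp add: image_image)
  also have "\<dots> = F'"
    using image_pm_closure_realized_eq[OF Q F F' sub] sgn_image_pm_closure_realized[OF F'] by simp
  finally show ?thesis
    unfolding isometric_families_def using Q by blast
qed

text \<open>Realize both families by tree roots.  The isomorphism \<open>\<pi>\<close> maps the edge from \<open>v\<close> to its
  parent to an edge of the second tree, which occurs there with some sign \<open>\<tau> v\<close>; the signs
  \<open>\<epsilon>\<close> of the signed permutation matrix are then forced along the tree, starting from the root.\<close>
lemma marked_iso_isometric:
  fixes F :: "(real^'n) set"
  assumes F: "generates_Bn F" "realizes F G" and F': "generates_Bn F'" "realizes F' G'"
    and iso: "marked_iso (Bn_edges G) (Bn_marked G) (Bn_edges G') (Bn_marked G')"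
  shows "isometric_families F F'"
proof -
  obtain m p d s where T: "rooted_tree m p d" and s: "\<And>v. s v \<in> {1, -1}"
    and closure: "pm_closure G = pm_closure (range (tree_root m p s))"
    using realized_roots_tree_form[OF F] by blast
  note graph = marked_graph_of_tree_form[of m p d s G, OF T s closure]
  obtain \<pi> where \<pi>: "bij \<pi>" and edges: "\<And>i j. Bn_edges G' (\<pi> i) (\<pi> j) = parent_graph m p i j"
    and mark: "\<pi> m \<in> Bn_marked G'"
    using iso unfolding marked_iso_def graph by auto
  have "\<pi> (p v) \<noteq> \<pi> v \<and> Bn_edges G' (\<pi> (p v)) (\<pi> v) > 0" if "v \<noteq> m" for v
    using rooted_tree_parent_neq[OF T that] \<pi> edges[of "p v" v] that
    by (simp add: bij_def inj_eq parent_graph_def)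
  then obtain \<tau> where \<tau>: "\<And>v. \<tau> v \<in> {1, -1}"
    and \<tau>_edge: "\<And>v. v \<noteq> m \<Longrightarrow> hvec (\<pi> (p v)) + \<tau> v *\<^sub>R hvec (\<pi> v) \<in> pm_closure G'"
    using Bn_edge_signs[of "\<lambda>v. v \<noteq> m" "\<pi> \<circ> p" \<pi> G'] by (metis comp_apply)
  have sign: "s v * \<tau> v \<in> {1, -1}" for v
    using s[of v] \<tau>[of v] by auto
  obtain \<epsilon> where \<epsilon>_root: "\<epsilon> m = 1" and \<epsilon>: "\<And>v. \<epsilon> v \<in> {1, -1}"
    and \<epsilon>_step: "\<And>v. v \<noteq> m \<Longrightarrow> \<epsilon> v = (s v * \<tau> v) * \<epsilon> (p v)"
    using rooted_tree_sign_propagation[of m p d "\<lambda>v. s v * \<tau> v", OF T sign] by blast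
  obtain Q :: "real^'n \<Rightarrow> real^'n" where Q: "orthogonal_transformation Q"
    and Q_hvec: "\<And>i. Q (hvec i) = \<epsilon> i *\<^sub>R hvec (\<pi> i)"
    using signed_permutation_orthogonal[of \<pi> \<epsilon>, OF \<pi> \<epsilon>] by blast
  have lin: "linear Q"
    using Q orthogonal_transformation_linear by blast
  have "Q (tree_root m p s v) \<in> pm_closure G'" for v
  proof (cases "v = m")
    case True
    then show ?thesis
      using mark \<epsilon>_root by (simp add: tree_root_def Q_hvec Bn_marked_iff)
  next
    case False
    have "s v * \<epsilon> v = \<epsilon> (p v) * \<tau> v"
      using \<epsilon>_step[OF False] s[of v] by (auto simp: algebra_simps)
    then have "Q (tree_root m p s v) = \<epsilon> (p v) *\<^sub>R (hvec (\<pi> (p v)) + \<tau> v *\<^sub>R hvec (\<pi> v))"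
      using False linear_add[OF lin] linear_scale[OF lin]
      by (simp add: tree_root_def Q_hvec scaleR_add_right)
    then show ?thesis
      using \<tau>_edge[OF False] by (simp only: sign_scaleR_in_pm_closure_iff[OF \<epsilon>[of "p v"]])
  qed
  then have "Q ` pm_closure G \<subseteq> pm_closure G'"
    unfolding closure image_pm_closure_linear[OF lin] by (intro pm_closure_subset) auto
  then show ?thesis
    using isometric_if_image_pm_closure[OF Q _ F(2) _ F'(2)] F(1) F'(1)
    by (simp add: generates_Bn_def)
qed

section \<open>Every marked tree is realized\<close>

lemma reflection_swap_hvec:
  "c \<noteq> e \<Longrightarrow> reflection (hvec c - hvec e) (hvec k) =
    (if k = c then hvec e else if k = e then hvec c else hvec k)"
  using reflection_long_root_hvec[of c e 1 "-1" k] by simp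

text \<open>Conjugating by the reflection in \<open>hvec (p v) - hvec v\<close> moves \<open>hvec m - hvec (p v)\<close> to
  \<open>hvec m - hvec v\<close>, so the reflections of the parent edges generate all transpositions.\<close>
lemma swap_reflections_in_refl_group:
  assumes T: "rooted_tree m p d"
    and parents: "\<And>v. v \<noteq> m \<Longrightarrow> reflection (hvec (p v) - hvec v) \<in> refl_group S"
    and "a \<noteq> b"
  shows "reflection (hvec a - hvec b) \<in> refl_group S"
proof -
  have from_root: "reflection (hvec m - hvec v) \<in> refl_group S" if "v \<noteq> m" for v
    using T that
  proof (induction v rule: rooted_tree_induct)
    case (parent v)
    show ?case
    proof (cases "p v = m")
      case True
      then show ?thesis
        using parents[OF parent(1)] by simp
    next
      case False
      have "p v \<noteq> v"
        using rooted_tree_parent_neq[OF T parent(1)] .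
      then have "reflection (hvec (p v) - hvec v) (hvec m - hvec (p v)) = hvec m - hvec v"
        using False parent(1)
        by (simp add: linear_diff[OF linear_reflection] reflection_swap_hvec)
      then show ?thesis
        using reflection_image_in_refl_group[OF parents[OF parent(1)] parent(2)[OF False]] by simp
    qed
  qed simp
  show ?thesis
  proof (cases "a = m \<or> b = m")
    case True
    then show ?thesis
      using from_root \<open>a \<noteq> b\<close> reflection_uminus[of "hvec m - hvec a"] by auto
  next
    case False
    then have "reflection (hvec m - hvec a) (hvec m - hvec b) = hvec a - hvec b"
      using \<open>a \<noteq> b\<close> by (auto simp: linear_diff[OF linear_reflection] reflection_swap_hvec)
    then show ?thesis
      using reflection_image_in_refl_group[OF from_root from_root] False by metis
  qed
qed

lemma Weyl_Bn_subset_refl_group: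
  fixes S :: "(real^'n) set"
  assumes T: "rooted_tree m p d"
    and parents: "\<And>v. v \<noteq> m \<Longrightarrow> reflection (hvec (p v) - hvec v) \<in> refl_group S"
    and root: "reflection (hvec m) \<in> refl_group S"
  shows "Weyl_Bn \<subseteq> refl_group S"
proof (rule refl_group_subsetI)
  have swap: "reflection (hvec a - hvec b) \<in> refl_group S" if "a \<noteq> b" for a b
    using T parents that by (rule swap_reflections_in_refl_group)
  have axis_refl: "reflection (hvec a) \<in> refl_group S" for a
  proof (cases "a = m")
    case False
    then have "reflection (hvec m - hvec a) (hvec m) = hvec a"
      by (simp add: reflection_swap_hvec)
    then show ?thesis
      using reflection_image_in_refl_group[OF swap[OF False[symmetric]] root] by simp
  qed (use root in simp)
  have plus: "reflection (hvec a + hvec b) \<in> refl_group S" if "a \<noteq> b" for a b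
  proof -
    have "reflection (hvec b) (hvec a - hvec b) = hvec a + hvec b"
      using that by (simp add: linear_diff[OF linear_reflection] reflection_hvec_hvec)
    then show ?thesis
      using reflection_image_in_refl_group[OF axis_refl[of b] swap[OF that]] by simp
  qed
  fix r :: "real^'n"
  assume "r \<in> Bn_roots"
  then show "reflection r \<in> refl_group S"
  proof (cases rule: Bn_roots_cases)
    case (short i a)
    then show ?thesis
      using axis_refl reflection_scaleR[of a "hvec i"] by auto
  next
    case (long i j a b)
    then have "r = a *\<^sub>R (hvec i + (a * b) *\<^sub>R hvec j)" "a \<noteq> 0" "a * b \<in> {1, -1}"
      by (auto simp: algebra_simps)
    then show ?thesis
      using plus[OF long(1)] swap[OF long(1)] by (auto simp: reflection_scaleR)
  qed
qed

lemma simplex_family_tree_roots: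
  fixes m :: "'n::finite"
  assumes T: "rooted_tree m p d" and s: "\<And>v. s v \<in> {1, -1}"
  shows "simplex_family (sgn ` pm_closure (range (tree_root m p s)))"
proof -
  define f where "f = sgn \<circ> tree_root m p s"
  have roots: "tree_root m p s v \<in> Bn_roots" for v
    using tree_root_in_Bn_roots[OF T s] .
  have "inj f"
  proof (rule injI)
    fix x y
    assume "f x = f y"
    then have "tree_root m p s x = tree_root m p s y"
      using inj_on_sgn_Bn_roots roots unfolding inj_on_def f_def comp_def by blast
    then show "x = y"
      using inj_tree_root[OF T s] by (simp add: inj_eq)
  qed
  moreover have "span (range f) = UNIV"
  proof -
    have "span ((\<lambda>x. inverse (norm x) *\<^sub>R x) ` range (tree_root m p s)) = span (range (tree_root m p s))"
      using roots Bn_root_nonzero by (intro span_image_scale) auto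
    then show ?thesis
      using span_tree_roots[OF T s] by (simp add: f_def sgn_div_norm image_comp comp_def)
  qed
  ultimately have "independent (range f)"
    using card_eq_dim[of "range f" UNIV] by (simp add: card_image)
  moreover have "norm (f i) = 1" for i
    using Bn_root_nonzero[OF roots[of i]] by (simp add: f_def norm_sgn)
  moreover have "sgn ` pm_closure (range (tree_root m p s)) = pm_closure (range f)"
    by (simp add: f_def sgn_pm_closure image_comp)
  ultimately show ?thesis
    unfolding simplex_family_iff using \<open>inj f\<close> by blast
qed

text \<open>With all signs \<open>-1\<close> the parent edges give the reflections \<open>hvec (p v) - hvec v\<close>.\<close>
lemma refl_group_tree_roots:
  fixes m :: "'n::finite"
  assumes T: "rooted_tree m p d"
  shows "refl_group (pm_closure (range (tree_root m p (\<lambda>_. -1)))) = Weyl_Bn"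
proof
  let ?B = "range (tree_root m p (\<lambda>_. -1))"
  have "?B \<subseteq> Bn_roots"
    using tree_root_in_Bn_roots[OF T] by auto
  then show "refl_group (pm_closure ?B) \<subseteq> Weyl_Bn"
    by (intro refl_group_mono pm_closure_subset_Bn_roots)
  have "Weyl_Bn \<subseteq> refl_group ?B"
  proof (rule Weyl_Bn_subset_refl_group[OF T])
    show "reflection (hvec (p v) - hvec v) \<in> refl_group ?B" if "v \<noteq> m" for v
      using reflection_in_refl_group[of "tree_root m p (\<lambda>_. -1) v" ?B] that
      by (simp add: tree_root_def)
    show "reflection (hvec m) \<in> refl_group ?B"
      using reflection_in_refl_group[of "tree_root m p (\<lambda>_. -1) m" ?B] by (simp add: tree_root_def)
  qed
  then show "Weyl_Bn \<subseteq> refl_group (pm_closure ?B)"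
    using refl_group_mono[of ?B "pm_closure ?B"] by (auto simp: pm_closure_def)
qed

lemma marked_tree_realized:
  fixes E :: "'n::finite \<Rightarrow> 'n \<Rightarrow> nat"
  assumes "marked_tree_one E M"
  shows "\<exists>(F :: (real^'n) set) G. generates_Bn F \<and> realizes F G \<and>
    marked_iso (Bn_edges G) (Bn_marked G) E M"
proof -
  obtain m where M: "M = {m}"
    using assms by (auto simp: marked_tree_one_def card_1_singleton_iff)
  have E: "is_tree E"
    using assms by (simp add: marked_tree_one_def)
  obtain p d where T: "rooted_tree m p d" and parent_edges: "\<And>v. v \<noteq> m \<Longrightarrow> adj E (p v) v"
    using exists_rooted_tree[of "adj E" m] E unfolding is_tree_def by blast
  define s where "s = (\<lambda>_ :: 'n. -1 :: real)"
  have s: "s v \<in> {1, -1}" for v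
    by (simp add: s_def)
  define G where "G = pm_closure (range (tree_root m p s))"
  have "range (tree_root m p s) \<subseteq> Bn_roots"
    using tree_root_in_Bn_roots[of m p d s, OF T s] by auto
  then have realized: "realizes (sgn ` G) G"
    unfolding G_def realizes_iff using pm_closure_subset_Bn_roots by blast
  have "refl_group (sgn ` G) = Weyl_Bn"
    using refl_group_tree_roots[OF T] by (simp add: refl_group_sgn_image G_def s_def)
  then have "generates_Bn (sgn ` G)"
    unfolding generates_Bn_def
    using simplex_family_tree_roots[of m p d s, OF T s] orthogonal_transformation_id[folded id_def]
    by (intro conjI exI[of _ id]) (simp_all add: G_def)
  moreover have "Bn_edges G = E" "Bn_marked G = M"
    using is_tree_eq_parent_graph[OF E T parent_edges] Bn_edges_tree_roots[of m p d s, OF T s]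
      Bn_marked_tree_roots[of m p d s, OF T s] M
    by (simp_all add: Bn_edges_pm_closure Bn_marked_pm_closure G_def)
  then have "marked_iso (Bn_edges G) (Bn_marked G) E M"
    unfolding marked_iso_def by (intro exI[of _ id]) simp
  ultimately show ?thesis
    using realized by blast
qed

theorem theorem2:
  assumes "CARD('n) \<ge> 2"
  shows
    
    "(\<forall>(F :: (real^'n) set). generates_Bn F \<longrightarrow>
        (\<exists>F' G. isometric_families F F' \<and> realizes F' G))
   \<and> 
    (\<forall>(F :: (real^'n) set) G. generates_Bn F \<and> realizes F G \<longrightarrow>
        marked_tree_one (Bn_edges G) (Bn_marked G))
   \<and> 
    (\<forall>(F :: (real^'n) set) F' G G'. generates_Bn F \<and> isometric_families F F' \<and>
        realizes F G \<and> realizes F' G' \<longrightarrow>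
        marked_iso (Bn_edges G) (Bn_marked G) (Bn_edges G') (Bn_marked G'))
   \<and> 
    (\<forall>(F :: (real^'n) set) F' G G'. generates_Bn F \<and> generates_Bn F' \<and>
        realizes F G \<and> realizes F' G' \<and>
        marked_iso (Bn_edges G) (Bn_marked G) (Bn_edges G') (Bn_marked G') \<longrightarrow>
        isometric_families F F')
   \<and> 
    (\<forall>(E :: 'n \<Rightarrow> 'n \<Rightarrow> nat) M. marked_tree_one E M \<longrightarrow>
        (\<exists>(F :: (real^'n) set) G. generates_Bn F \<and> realizes F G \<and>
           marked_iso (Bn_edges G) (Bn_marked G) E M))"
proof (intro conjI allI impI)
  show "\<exists>F' G. isometric_families F F' \<and> realizes F' G" if "generates_Bn F" for F :: "(real^'n) set"
    using that by (rule generates_Bn_isometric_realized)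
  show "marked_tree_one (Bn_edges G) (Bn_marked G)"
    if "generates_Bn F \<and> realizes F G" for F :: "(real^'n) set" and G
    using that realized_marked_tree_one by blast
  show "marked_iso (Bn_edges G) (Bn_marked G) (Bn_edges G') (Bn_marked G')"
    if "generates_Bn F \<and> isometric_families F F' \<and> realizes F G \<and> realizes F' G'"
    for F :: "(real^'n) set" and F' G G'
    using that isometric_realizations_marked_iso[OF assms] by blast
  show "isometric_families F F'"
    if "generates_Bn F \<and> generates_Bn F' \<and> realizes F G \<and> realizes F' G' \<and>
      marked_iso (Bn_edges G) (Bn_marked G) (Bn_edges G') (Bn_marked G')"
    for F :: "(real^'n) set" and F' G G'
    using that marked_iso_isometric by blast
  show "\<exists>(F :: (real^'n) set) G. generates_Bn F \<and> realizes F G \<and>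
      marked_iso (Bn_edges G) (Bn_marked G) E M"
    if "marked_tree_one E M" for E :: "'n \<Rightarrow> 'n \<Rightarrow> nat" and M
    using that by (rule marked_tree_realized)
qed

end
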